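(* Let $H$ be a real separable Hilbert space, $k,q\in\mathbb{N}$ and $n=k+q$. Then, inside $H^{\otimes n}$, \[ H^{\odot[k],\wedge[q]}=\big(H^{\odot[k],\wedge[q]}\cap H^{\odot[k+1],\wedge[q-1]}\big)\oplus\big(H^{\odot[k],\wedge[q]}\cap H^{\odot[k-1],\wedge[q+1]}\big). \]
   Context: $H^{\otimes n}$ is the Hilbert-space completed $n$-th tensor power of $H$. For integers $m,p\ge0$ with $m+p=n$, $H^{\odot[m],\wedge[p]}$ denotes the closed linear span of all elements of $H^{\otimes n}$ that are symmetric in some set of $m$ tensor positions and skew-symmetric in the remaining $p$ positions (the set of positions ranges over all $m$-element subsets of $\{1,\dots,n\}$). If $m$ or $p$ is negative, $H^{\odot[m],\wedge[p]}$ is taken to be $\{0\}$. *)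

theory Defs
  imports "HOL-Analysis.Analysis" "HOL-Combinatorics.Permutations"
begin

text \<open>
  Model of the Hilbert tensor power H^(tensor n) of a real Hilbert space H:
  the Hilbert space of Hilbert--Schmidt n-linear forms on H (canonically
  isometric to the Hilbert-space completed tensor power; the elementary tensor
  x_1 (x) ... (x) x_n corresponds to the form (y_1,...,y_n) |-> prod <x_i,y_i>).
  Permuting tensor positions corresponds to permuting the arguments.
\<close>

definition onb :: "'a::real_inner set \<Rightarrow> bool" where
  "onb B \<longleftrightarrow> (\<forall>x\<in>B. norm x = 1) \<and> (\<forall>x\<in>B. \<forall>y\<in>B. x \<noteq> y \<longrightarrow> inner x y = 0)
              \<and> closure (span B) = UNIV"

definition the_onb :: "'a::real_inner set" where
  "the_onb = (SOME B. onb B)"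

definition tuples :: "'a set \<Rightarrow> nat \<Rightarrow> 'a list set" where
  "tuples B n = {xs. set xs \<subseteq> B \<and> length xs = n}"

definition tensor_power :: "nat \<Rightarrow> ('a::real_inner list \<Rightarrow> real) set" where
  "tensor_power n = {T.
     (\<forall>xs. length xs \<noteq> n \<longrightarrow> T xs = 0)
   \<and> (\<forall>xs i. length xs = n \<longrightarrow> i < n \<longrightarrow> linear (\<lambda>x. T (xs[i := x])))
   \<and> (\<exists>C. \<forall>xs. length xs = n \<longrightarrow> \<bar>T xs\<bar> \<le> C * (\<Prod>x\<leftarrow>xs. norm x))
   \<and> (\<lambda>e. (T e)\<^sup>2) summable_on tuples the_onb n}"

text \<open>Hilbert--Schmidt inner product and norm (independent of the orthonormal basis).\<close>
definition tinner :: "nat \<Rightarrow> ('a::real_inner list \<Rightarrow> real) \<Rightarrow> ('a list \<Rightarrow> real) \<Rightarrow> real" where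
  "tinner n S T = (\<Sum>\<^sub>\<infinity>e\<in>tuples the_onb n. S e * T e)"

definition tnorm :: "nat \<Rightarrow> ('a::real_inner list \<Rightarrow> real) \<Rightarrow> real" where
  "tnorm n T = sqrt (tinner n T T)"

definition lin_span :: "('a list \<Rightarrow> real) set \<Rightarrow> ('a list \<Rightarrow> real) set" where
  "lin_span X = {(\<lambda>xs. \<Sum>i<m. c i * f i xs) | (m::nat) (c::nat \<Rightarrow> real) f. \<forall>i<m. f i \<in> X}"

definition closed_span :: "nat \<Rightarrow> ('a::real_inner list \<Rightarrow> real) set \<Rightarrow> ('a list \<Rightarrow> real) set" where
  "closed_span n X = {T \<in> tensor_power n.
      \<forall>\<epsilon>>0. \<exists>S\<in>lin_span X. tnorm n (\<lambda>xs. T xs - S xs) < \<epsilon>}"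

definition sym_skew_in :: "nat \<Rightarrow> nat set \<Rightarrow> ('a list \<Rightarrow> real) \<Rightarrow> bool" where
  "sym_skew_in n S T \<longleftrightarrow>
     (\<forall>\<sigma> xs. \<sigma> permutes S \<longrightarrow> length xs = n \<longrightarrow> T (permute_list \<sigma> xs) = T xs)
   \<and> (\<forall>\<sigma> xs. \<sigma> permutes ({0..<n} - S) \<longrightarrow> length xs = n \<longrightarrow>
          T (permute_list \<sigma> xs) = of_int (sign \<sigma>) * T xs)"

text \<open>H^{odot[m], wedge[p]} inside H^(tensor (m+p)); {0} if m or p is negative.\<close>
definition sym_skew_space :: "int \<Rightarrow> int \<Rightarrow> ('a::real_inner list \<Rightarrow> real) set" where
  "sym_skew_space m p =
     (if m < 0 \<or> p < 0 then {\<lambda>_. 0}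
      else (let n = nat (m + p) in
        closed_span n (\<Union>S\<in>{S. S \<subseteq> {0..<n} \<and> card S = nat m}.
                        {T \<in> tensor_power n. sym_skew_in n S T})))"

end

theory Submission
  imports Defs
begin

text \<open>
  The space of type \<open>(k, q)\<close> is the closed span of forms \<open>T\<close> that are symmetric in a \<open>k\<close>-set \<open>S\<close>
  of positions and skew in its complement \<open>S'\<close>.  For \<open>t \<in> S'\<close> the form \<open>T + \<Sum>s\<in>S. (s t)T\<close> is symmetric in
  \<open>S \<union> {t}\<close> and skew in \<open>S' - {t}\<close>; for \<open>s \<in> S\<close> the form \<open>T - \<Sum>r\<in>S'. (r s)T\<close> is symmetric in
  \<open>S - {s}\<close> and skew in \<open>S' \<union> {s}\<close>.  Summing over \<open>t\<close>, resp. \<open>s\<close>, with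
  \<open>X = \<Sum>s\<in>S. \<Sum>t\<in>S'. (s t)T\<close>, gives \<open>n T = (q T + X) + (k T - X)\<close>, the summands being of type
  \<open>(k+1, q-1)\<close> and \<open>(k-1, q+1)\<close>.  The cross term can be computed without knowing \<open>S\<close>: the sum
  \<open>D\<close> of all transpositions satisfies \<open>D T = \<kappa> T + 2 X\<close> with \<open>\<kappa> = k(k-1) - q(q-1)\<close>.  So one
  bounded operator, \<open>((q - \<kappa>/2) + D/2)/n\<close>, performs the splitting on all generators, and hence
  on their closed span.  Orthogonality: a \<open>(k+1)\<close>-set and a \<open>(q+1)\<close>-set of positions share two
  positions, and their transposition fixes a form symmetric in the first set while negating a
  form skew in the second.
\<close>

section \<open>Permuting positions\<close>

text \<open>The unqualified name \<open>transpose\<close> denotes matrix transposition once HOL-Analysis is loaded.\<close>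

abbreviation transposition :: "nat \<Rightarrow> nat \<Rightarrow> nat \<Rightarrow> nat" where
  "transposition i j \<equiv> Transposition.transpose i j"

abbreviation rsign :: "(nat \<Rightarrow> nat) \<Rightarrow> real" where
  "rsign \<pi> \<equiv> of_int (sign \<pi>)"

definition permute_form :: "(nat \<Rightarrow> nat) \<Rightarrow> ('a list \<Rightarrow> real) \<Rightarrow> 'a list \<Rightarrow> real" where
  "permute_form \<sigma> T = (\<lambda>xs. T (permute_list \<sigma> xs))"

lemma permute_list_comp:
  assumes "\<tau> permutes {0..<length xs}"
  shows "permute_list (\<sigma> \<circ> \<tau>) xs = permute_list \<tau> (permute_list \<sigma> xs)"
  using permute_list_compose[of \<tau> xs \<sigma>] assms by (simp add: atLeast0LessThan)

lemma permute_list_list_update: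
  assumes "\<sigma> permutes {0..<n}" "length xs = n" "i < n"
  shows "permute_list \<sigma> (xs[i := x]) = (permute_list \<sigma> xs)[inv \<sigma> i := x]"
proof (rule nth_equalityI)
  have p: "\<sigma> permutes {..<length xs}" using assms by (simp add: atLeast0LessThan)
  have p': "\<sigma> permutes {..<length (xs[i:=x])}" using assms by (simp add: atLeast0LessThan)
  show "length (permute_list \<sigma> (xs[i := x])) = length ((permute_list \<sigma> xs)[inv \<sigma> i := x])"
    by simp
  fix j assume "j < length (permute_list \<sigma> (xs[i := x]))"
  hence jn: "j < n" using assms by simp
  have "\<sigma> j < n" using permutes_in_image[OF assms(1)] jn by simp
  moreover have "\<sigma> j = i \<longleftrightarrow> j = inv \<sigma> i"
    using permutes_inverses[OF assms(1)] by metis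
  ultimately show "permute_list \<sigma> (xs[i := x]) ! j = (permute_list \<sigma> xs)[inv \<sigma> i := x] ! j"
    using permute_list_nth[OF p', of j] permute_list_nth[OF p, of j] jn assms
    by (auto simp: nth_list_update)
qed

lemma bij_betw_permute_list_tuples:
  assumes \<sigma>: "\<sigma> permutes {0..<n}"
  shows "bij_betw (permute_list \<sigma>) (tuples B n) (tuples B n)"
proof (rule bij_betw_byWitness[where f'="permute_list (inv \<sigma>)"])
  have \<sigma>': "inv \<sigma> permutes {0..<n}" using permutes_inv[OF \<sigma>] .
  have inv: "\<sigma> \<circ> inv \<sigma> = id" "inv \<sigma> \<circ> \<sigma> = id"
    using permutes_inverses[OF \<sigma>] by (auto simp: fun_eq_iff)
  have "permute_list (inv \<sigma>) (permute_list \<sigma> xs) = xs" "permute_list \<sigma> (permute_list (inv \<sigma>) xs) = xs"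
    if "length xs = n" for xs
    using permute_list_comp[of "inv \<sigma>" xs \<sigma>] permute_list_comp[of \<sigma> xs "inv \<sigma>"] \<sigma> \<sigma>' inv that
    by simp_all
  then show "\<forall>xs\<in>tuples B n. permute_list (inv \<sigma>) (permute_list \<sigma> xs) = xs"
    "\<forall>xs\<in>tuples B n. permute_list \<sigma> (permute_list (inv \<sigma>) xs) = xs"
    by (auto simp: tuples_def)
  show "permute_list \<sigma> ` tuples B n \<subseteq> tuples B n"
    using \<sigma> by (auto simp: tuples_def atLeast0LessThan)
  show "permute_list (inv \<sigma>) ` tuples B n \<subseteq> tuples B n"
    using \<sigma>' by (auto simp: tuples_def atLeast0LessThan)
qed

lemma prod_list_map_permute_list:
  fixes f :: "'a \<Rightarrow> 'b::comm_monoid_mult"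
  assumes "\<sigma> permutes {0..<length xs}"
  shows "(\<Prod>x\<leftarrow>permute_list \<sigma> xs. f x) = (\<Prod>x\<leftarrow>xs. f x)"
proof -
  have p: "\<sigma> permutes {..<length xs}" using assms by (simp add: atLeast0LessThan)
  have "(\<Prod>x\<leftarrow>permute_list \<sigma> xs. f x) = prod_list (permute_list \<sigma> (map f xs))"
    using permute_list_map[OF p, of f] by simp
  also have "\<dots> = prod_mset (mset (permute_list \<sigma> (map f xs)))" by (simp add: prod_mset_prod_list)
  also have "\<dots> = prod_mset (mset (map f xs))" using p by (subst mset_permute_list) auto
  finally show ?thesis by (metis mset_map prod_mset_prod_list)
qed


section \<open>The tensor power as a space of forms\<close>

lemma tensor_powerD:
  assumes "T \<in> tensor_power n"
  shows "\<And>xs. length xs \<noteq> n \<Longrightarrow> T xs = 0"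
    and "\<And>xs i. length xs = n \<Longrightarrow> i < n \<Longrightarrow> linear (\<lambda>x. T (xs[i := x]))"
    and "\<exists>C. \<forall>xs. length xs = n \<longrightarrow> \<bar>T xs\<bar> \<le> C * (\<Prod>x\<leftarrow>xs. norm x)"
    and "(\<lambda>e. (T e)\<^sup>2) summable_on tuples the_onb n"
  using assms unfolding tensor_power_def by auto

lemma tensor_power_zero: "(\<lambda>_. 0) \<in> tensor_power n"
  unfolding tensor_power_def by (auto intro!: exI[of _ 0] simp: linear_iff)

lemma tensor_power_add:
  assumes S: "S \<in> tensor_power n" and T: "T \<in> tensor_power n"
  shows "(\<lambda>xs. S xs + T xs) \<in> tensor_power n"
proof -
  obtain C1 where C1: "\<forall>xs. length xs = n \<longrightarrow> \<bar>S xs\<bar> \<le> C1 * (\<Prod>x\<leftarrow>xs. norm x)"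
    using tensor_powerD(3)[OF S] by blast
  obtain C2 where C2: "\<forall>xs. length xs = n \<longrightarrow> \<bar>T xs\<bar> \<le> C2 * (\<Prod>x\<leftarrow>xs. norm x)"
    using tensor_powerD(3)[OF T] by blast
  have "linear (\<lambda>x. S (xs[i := x]) + T (xs[i := x]))" if "length xs = n" "i < n" for xs i
    using tensor_powerD(2)[OF S that] tensor_powerD(2)[OF T that]
    unfolding linear_iff by (simp add: algebra_simps)
  moreover have "\<forall>xs. length xs = n \<longrightarrow> \<bar>S xs + T xs\<bar> \<le> (C1 + C2) * (\<Prod>x\<leftarrow>xs. norm x)"
    using C1 C2 by (force simp: algebra_simps)
  moreover have "(\<lambda>e. (S e + T e)\<^sup>2) summable_on tuples the_onb n"
  proof (rule summable_on_comparison_test)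
    show "(\<lambda>e. 2 * (S e)\<^sup>2 + 2 * (T e)\<^sup>2) summable_on tuples the_onb n"
      by (intro summable_on_add summable_on_cmult_right tensor_powerD(4) S T)
    show "(S e + T e)\<^sup>2 \<le> 2 * (S e)\<^sup>2 + 2 * (T e)\<^sup>2" for e
      using sum_squares_bound[of "S e" "T e"] by (simp add: power2_sum)
  qed simp
  ultimately show ?thesis
    using tensor_powerD(1)[OF S] tensor_powerD(1)[OF T] unfolding tensor_power_def by auto
qed

lemma tensor_power_scale:
  assumes T: "T \<in> tensor_power n"
  shows "(\<lambda>xs. c * T xs) \<in> tensor_power n"
proof -
  obtain C where C: "\<forall>xs. length xs = n \<longrightarrow> \<bar>T xs\<bar> \<le> C * (\<Prod>x\<leftarrow>xs. norm x)"
    using tensor_powerD(3)[OF T] by blast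
  have "linear (\<lambda>x. c * T (xs[i := x]))" if "length xs = n" "i < n" for xs i
    using tensor_powerD(2)[OF T that] unfolding linear_iff by (simp add: algebra_simps)
  moreover have "\<forall>xs. length xs = n \<longrightarrow> \<bar>c * T xs\<bar> \<le> (\<bar>c\<bar> * C) * (\<Prod>x\<leftarrow>xs. norm x)"
    using C by (auto simp: abs_mult mult.assoc intro!: mult_left_mono)
  moreover have "(\<lambda>e. (c * T e)\<^sup>2) summable_on tuples the_onb n"
    using summable_on_cmult_right[OF tensor_powerD(4)[OF T], of "c\<^sup>2"]
    by (simp add: power_mult_distrib)
  ultimately show ?thesis
    using tensor_powerD(1)[OF T] unfolding tensor_power_def by auto
qed

lemma tensor_power_diff:
  "S \<in> tensor_power n \<Longrightarrow> T \<in> tensor_power n \<Longrightarrow> (\<lambda>xs. S xs - T xs) \<in> tensor_power n"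
  using tensor_power_add[OF _ tensor_power_scale[of T n "-1"]] by simp

lemma tensor_power_sum:
  "(\<And>i. i \<in> I \<Longrightarrow> f i \<in> tensor_power n) \<Longrightarrow> (\<lambda>xs. \<Sum>i\<in>I. f i xs) \<in> tensor_power n"
proof (induction I rule: infinite_finite_induct)
  case (insert x F)
  then show ?case using tensor_power_add[of "f x" n "\<lambda>xs. \<Sum>i\<in>F. f i xs"] by simp
qed (simp_all add: tensor_power_zero)

lemma tensor_power_permute:
  assumes T: "T \<in> tensor_power n" and \<sigma>: "\<sigma> permutes {0..<n}"
  shows "permute_form \<sigma> T \<in> tensor_power n"
proof -
  obtain C where C: "\<forall>xs. length xs = n \<longrightarrow> \<bar>T xs\<bar> \<le> C * (\<Prod>x\<leftarrow>xs. norm x)"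
    using tensor_powerD(3)[OF T] by blast
  have "linear (\<lambda>x. permute_form \<sigma> T (xs[i := x]))" if "length xs = n" "i < n" for xs i
  proof -
    have "inv \<sigma> i < n" using permutes_in_image[OF permutes_inv[OF \<sigma>]] that by simp
    then show ?thesis
      using tensor_powerD(2)[OF T, of "permute_list \<sigma> xs" "inv \<sigma> i"] that
      by (simp add: permute_form_def permute_list_list_update[OF \<sigma> that])
  qed
  moreover have "\<bar>permute_form \<sigma> T xs\<bar> \<le> C * (\<Prod>x\<leftarrow>xs. norm x)" if "length xs = n" for xs
    using C[rule_format, of "permute_list \<sigma> xs"] prod_list_map_permute_list[of \<sigma> xs norm] \<sigma> that
    by (simp add: permute_form_def)
  moreover have "(\<lambda>e. (permute_form \<sigma> T e)\<^sup>2) summable_on tuples the_onb n"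
    using summable_on_reindex_bij_betw[OF bij_betw_permute_list_tuples[OF \<sigma>], of "\<lambda>e. (T e)\<^sup>2"]
      tensor_powerD(4)[OF T]
    by (simp add: permute_form_def)
  ultimately show ?thesis
    using tensor_powerD(1)[OF T] unfolding tensor_power_def by (auto simp: permute_form_def)
qed

lemma permute_form_comp:
  assumes "T \<in> tensor_power n" "\<tau> permutes {0..<n}"
  shows "permute_form (\<sigma> \<circ> \<tau>) T = permute_form \<sigma> (permute_form \<tau> T)"
proof
  fix xs :: "'a list"
  show "permute_form (\<sigma> \<circ> \<tau>) T xs = permute_form \<sigma> (permute_form \<tau> T) xs"
    using permute_list_comp[of \<tau> xs \<sigma>] tensor_powerD(1)[OF assms(1)] assms(2)
    by (cases "length xs = n") (simp_all add: permute_form_def)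
qed

lemma permute_form_scale: "permute_form \<sigma> (\<lambda>xs. c * T xs) = (\<lambda>xs. c * permute_form \<sigma> T xs)"
  by (simp add: permute_form_def)


section \<open>The Hilbert--Schmidt pairing\<close>

definition tnorm_sq :: "nat \<Rightarrow> ('a::real_inner list \<Rightarrow> real) \<Rightarrow> real" where
  "tnorm_sq n T = tinner n T T"

lemma summable_on_tuples_mult:
  assumes S: "S \<in> tensor_power n" and T: "T \<in> tensor_power n"
  shows "(\<lambda>e. S e * T e) summable_on tuples the_onb n"
proof -
  have "(\<lambda>e. (1/2) * (S e + T e)\<^sup>2 + (-1/2) * (S e)\<^sup>2 + (-1/2) * (T e)\<^sup>2)
          summable_on tuples the_onb n"
    using tensor_powerD(4)[OF tensor_power_add[OF S T]] tensor_powerD(4)[OF S] tensor_powerD(4)[OF T]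
    by (intro summable_on_cmult_right summable_on_add)
  moreover have "(\<lambda>e. (1/2) * (S e + T e)\<^sup>2 + (-1/2) * (S e)\<^sup>2 + (-1/2) * (T e)\<^sup>2) = (\<lambda>e. S e * T e)"
    by (simp add: fun_eq_iff power2_sum algebra_simps)
  ultimately show ?thesis by simp
qed

lemma tinner_commute: "tinner n S T = tinner n T S"
  unfolding tinner_def by (simp add: mult.commute)

lemma tinner_zero_left: "tinner n (\<lambda>_. 0) T = 0"
  unfolding tinner_def by simp

lemma tinner_scale_left: "tinner n (\<lambda>xs. c * S xs) T = c * tinner n S T"
  unfolding tinner_def by (simp add: mult.assoc infsum_cmult_right')

lemma tinner_add_left:
  assumes "S \<in> tensor_power n" "T \<in> tensor_power n" "U \<in> tensor_power n"
  shows "tinner n (\<lambda>xs. S xs + T xs) U = tinner n S U + tinner n T U"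
  unfolding tinner_def
  using infsum_add[OF summable_on_tuples_mult[OF assms(1,3)] summable_on_tuples_mult[OF assms(2,3)]]
  by (simp add: distrib_right)

lemma tinner_diff_left:
  assumes "S \<in> tensor_power n" "T \<in> tensor_power n" "U \<in> tensor_power n"
  shows "tinner n (\<lambda>xs. S xs - T xs) U = tinner n S U - tinner n T U"
  using tinner_add_left[OF assms(1) tensor_power_scale[OF assms(2), of "-1"] assms(3)]
    tinner_scale_left[of n "-1" T U]
  by simp

lemma tinner_permute:
  assumes "\<sigma> permutes {0..<n}"
  shows "tinner n (permute_form \<sigma> S) (permute_form \<sigma> T) = tinner n S T"
  unfolding tinner_def permute_form_def
  using infsum_reindex_bij_betw[OF bij_betw_permute_list_tuples[OF assms], of "\<lambda>e. S e * T e"]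
  by simp

lemma tnorm_sq_nonneg: "0 \<le> tnorm_sq n T"
  unfolding tnorm_sq_def tinner_def by (rule infsum_nonneg) simp

lemma tnorm_sq_zero: "tnorm_sq n (\<lambda>_. 0) = 0"
  unfolding tnorm_sq_def by (rule tinner_zero_left)

lemma tnorm_sq_scale: "tnorm_sq n (\<lambda>xs. c * T xs) = c\<^sup>2 * tnorm_sq n T"
  unfolding tnorm_sq_def
  using tinner_commute[of n T "\<lambda>xs. c * T xs"] by (simp add: tinner_scale_left power2_eq_square)

lemma tnorm_sq_permute: "\<sigma> permutes {0..<n} \<Longrightarrow> tnorm_sq n (permute_form \<sigma> T) = tnorm_sq n T"
  unfolding tnorm_sq_def by (rule tinner_permute)

lemma tnorm_sq_add_le:
  assumes S: "S \<in> tensor_power n" and T: "T \<in> tensor_power n"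
  shows "tnorm_sq n (\<lambda>xs. S xs + T xs) \<le> 2 * tnorm_sq n S + 2 * tnorm_sq n T"
proof -
  have S2: "(\<lambda>e. 2 * (S e * S e)) summable_on tuples the_onb n"
    and T2: "(\<lambda>e. 2 * (T e * T e)) summable_on tuples the_onb n"
    by (intro summable_on_cmult_right summable_on_tuples_mult S T)+
  have "tnorm_sq n (\<lambda>xs. S xs + T xs) \<le> (\<Sum>\<^sub>\<infinity>e\<in>tuples the_onb n. 2 * (S e * S e) + 2 * (T e * T e))"
    unfolding tnorm_sq_def tinner_def
  proof (rule infsum_mono)
    show "(\<lambda>e. (S e + T e) * (S e + T e)) summable_on tuples the_onb n"
      using summable_on_tuples_mult[OF tensor_power_add[OF S T] tensor_power_add[OF S T]] .
    show "(\<lambda>e. 2 * (S e * S e) + 2 * (T e * T e)) summable_on tuples the_onb n"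
      by (rule summable_on_add[OF S2 T2])
    show "(S e + T e) * (S e + T e) \<le> 2 * (S e * S e) + 2 * (T e * T e)" for e
      using sum_squares_bound[of "S e" "T e"] by (simp add: power2_eq_square algebra_simps)
  qed
  also have "\<dots> = 2 * tnorm_sq n S + 2 * tnorm_sq n T"
    unfolding tnorm_sq_def tinner_def infsum_add[OF S2 T2] by (simp add: infsum_cmult_right')
  finally show ?thesis .
qed

lemma tnorm_sq_sum_le:
  assumes "finite I" "\<And>i. i \<in> I \<Longrightarrow> F i \<in> tensor_power n"
  shows "tnorm_sq n (\<lambda>xs. \<Sum>i\<in>I. F i xs) \<le> 2 ^ card I * (\<Sum>i\<in>I. tnorm_sq n (F i))"
  using assms
proof (induction I rule: finite_induct)
  case empty then show ?case by (simp add: tnorm_sq_zero)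
next
  case (insert x I)
  have "tnorm_sq n (\<lambda>xs. \<Sum>i\<in>insert x I. F i xs) = tnorm_sq n (\<lambda>xs. F x xs + (\<Sum>i\<in>I. F i xs))"
    using insert by simp
  also have "\<dots> \<le> 2 * tnorm_sq n (F x) + 2 * tnorm_sq n (\<lambda>xs. \<Sum>i\<in>I. F i xs)"
    using insert by (intro tnorm_sq_add_le tensor_power_sum) auto
  also have "\<dots> \<le> 2 ^ Suc (card I) * tnorm_sq n (F x) + 2 * (2 ^ card I * (\<Sum>i\<in>I. tnorm_sq n (F i)))"
    using insert tnorm_sq_nonneg[of n "F x"]
    by (intro add_mono mult_right_mono mult_left_mono) auto
  also have "\<dots> = 2 ^ card (insert x I) * (\<Sum>i\<in>insert x I. tnorm_sq n (F i))"
    using insert by (simp add: algebra_simps)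
  finally show ?case .
qed

text \<open>Young's inequality, used in place of Cauchy--Schwarz.\<close>

lemma abs_tinner_le:
  assumes S: "S \<in> tensor_power n" and T: "T \<in> tensor_power n" and c: "0 < c"
  shows "2 * \<bar>tinner n S T\<bar> \<le> c * tnorm_sq n S + tnorm_sq n T / c"
proof -
  have young: "2 * \<bar>x * y\<bar> \<le> c * (x * x) + (1/c) * (y * y)" for x y :: real
  proof -
    have "0 \<le> (c * \<bar>x\<bar> - \<bar>y\<bar>)\<^sup>2" by simp
    also have "\<dots> = c * (c * (x * x) + (1/c) * (y * y)) - c * (2 * \<bar>x * y\<bar>)"
      using c by (simp add: power2_diff power2_eq_square abs_mult abs_mult_self_eq field_simps)
    finally show ?thesis using c by simp
  qed
  have ST: "(\<lambda>e. norm (S e * T e)) summable_on tuples the_onb n"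
    using summable_on_tuples_mult[OF S T] by (rule summable_on_iff_abs_summable_on_real[THEN iffD1])
  have S2: "(\<lambda>e. c * (S e * S e)) summable_on tuples the_onb n"
    and T2: "(\<lambda>e. (1/c) * (T e * T e)) summable_on tuples the_onb n"
    by (intro summable_on_cmult_right summable_on_tuples_mult S T)+
  have abs: "(\<lambda>e. 2 * \<bar>S e * T e\<bar>) summable_on tuples the_onb n"
    using summable_on_cmult_right[OF ST, of 2] by simp
  have "2 * \<bar>tinner n S T\<bar> \<le> 2 * (\<Sum>\<^sub>\<infinity>e\<in>tuples the_onb n. norm (S e * T e))"
    using norm_infsum_bound[of "\<lambda>e. S e * T e"] ST unfolding tinner_def by simp
  also have "\<dots> = (\<Sum>\<^sub>\<infinity>e\<in>tuples the_onb n. 2 * \<bar>S e * T e\<bar>)"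
    by (simp add: infsum_cmult_right')
  also have "\<dots> \<le> (\<Sum>\<^sub>\<infinity>e\<in>tuples the_onb n. c * (S e * S e) + (1/c) * (T e * T e))"
    by (rule infsum_mono[OF abs summable_on_add[OF S2 T2] young])
  also have "\<dots> = c * tnorm_sq n S + tnorm_sq n T / c"
    unfolding infsum_add[OF S2 T2] infsum_cmult_right' tnorm_sq_def tinner_def by simp
  finally show ?thesis .
qed


section \<open>Linear and closed spans\<close>

lemma lin_span_zero: "(\<lambda>_. 0) \<in> lin_span X"
  unfolding lin_span_def by (auto intro!: exI[of _ "0::nat"])

lemma lin_span_base: "f \<in> X \<Longrightarrow> f \<in> lin_span X"
  unfolding lin_span_def
  by (auto intro!: exI[of _ "1::nat"] exI[of _ "\<lambda>_. 1"] exI[of _ "\<lambda>_. f"])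

lemma lin_span_add_base:
  assumes F: "F \<in> lin_span X" and g: "g \<in> X"
  shows "(\<lambda>xs. F xs + a * g xs) \<in> lin_span X"
proof -
  obtain m :: nat and c f where F': "F = (\<lambda>xs. \<Sum>i<m. c i * f i xs)" and f: "\<forall>i<m. f i \<in> X"
    using F unfolding lin_span_def by blast
  have "(\<lambda>xs. F xs + a * g xs) = (\<lambda>xs. \<Sum>i<Suc m. (c(m:=a)) i * (f(m:=g)) i xs)"
    unfolding F' by (auto simp: fun_eq_iff intro!: sum.cong)
  moreover have "\<forall>i<Suc m. (f(m:=g)) i \<in> X" using f g by (auto simp: less_Suc_eq)
  ultimately show ?thesis unfolding lin_span_def by blast
qed

lemma lin_span_induct [consumes 1, case_names zero add_base]:
  assumes F: "F \<in> lin_span X"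
    and zero: "P (\<lambda>_. 0)"
    and add_base: "\<And>F g a. F \<in> lin_span X \<Longrightarrow> g \<in> X \<Longrightarrow> P F \<Longrightarrow> P (\<lambda>xs. F xs + a * g xs)"
  shows "P F"
proof -
  obtain m :: nat and c f where F': "F = (\<lambda>xs. \<Sum>i<m. c i * f i xs)" and f: "\<forall>i<m. f i \<in> X"
    using F unfolding lin_span_def by blast
  have "k \<le> m \<Longrightarrow> (\<lambda>xs. \<Sum>i<k. c i * f i xs) \<in> lin_span X \<and> P (\<lambda>xs. \<Sum>i<k. c i * f i xs)" for k
  proof (induction k)
    case 0 then show ?case using zero lin_span_zero by simp
  next
    case (Suc k)
    then have IH: "(\<lambda>xs. \<Sum>i<k. c i * f i xs) \<in> lin_span X" "P (\<lambda>xs. \<Sum>i<k. c i * f i xs)"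
      by auto
    have "f k \<in> X" using f Suc.prems by auto
    then show ?case using lin_span_add_base[OF IH(1)] add_base[OF IH(1) _ IH(2)] by simp
  qed
  then show ?thesis using F' by auto
qed

lemma lin_span_add:
  assumes F: "F \<in> lin_span X" and G: "G \<in> lin_span X"
  shows "(\<lambda>xs. F xs + G xs) \<in> lin_span X"
  using G
proof (induction rule: lin_span_induct)
  case (add_base G g a)
  then show ?case using lin_span_add_base[OF add_base(3,2), of a] by (simp add: add.assoc)
qed (simp add: F)

lemma lin_span_scale:
  assumes "F \<in> lin_span X"
  shows "(\<lambda>xs. a * F xs) \<in> lin_span X"
  using assms
proof (induction rule: lin_span_induct)
  case (add_base G g b)
  then show ?case using lin_span_add_base[OF add_base(3,2), of "a * b"] by (simp add: algebra_simps)
qed (simp add: lin_span_zero)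

lemma lin_span_sum:
  "(\<And>i. i \<in> I \<Longrightarrow> f i \<in> lin_span X) \<Longrightarrow> (\<lambda>xs. \<Sum>i\<in>I. f i xs) \<in> lin_span X"
proof (induction I rule: infinite_finite_induct)
  case (insert x F)
  then show ?case using lin_span_add[of "f x" X "\<lambda>xs. \<Sum>i\<in>F. f i xs"] by simp
qed (simp_all add: lin_span_zero)

lemma lin_span_subset_tensor_power:
  assumes "X \<subseteq> tensor_power n" "F \<in> lin_span X"
  shows "F \<in> tensor_power n"
  using assms(2)
proof (induction rule: lin_span_induct)
  case (add_base F g a)
  then show ?case using assms(1) by (intro tensor_power_add tensor_power_scale) auto
qed (rule tensor_power_zero)

lemma closed_span_iff:
  "T \<in> closed_span n X \<longleftrightarrow>
     T \<in> tensor_power n \<and> (\<forall>\<delta>>0. \<exists>S\<in>lin_span X. tnorm_sq n (\<lambda>xs. T xs - S xs) < \<delta>)"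
proof -
  have tnorm_less: "tnorm n D < \<epsilon> \<longleftrightarrow> tnorm_sq n D < \<epsilon>\<^sup>2" if "0 < \<epsilon>" for D and \<epsilon> :: real
    using that real_sqrt_less_iff[of "tnorm_sq n D" "\<epsilon>\<^sup>2"] unfolding tnorm_def tnorm_sq_def by simp
  have "(\<forall>\<epsilon>>0. \<exists>S\<in>lin_span X. tnorm n (\<lambda>xs. T xs - S xs) < \<epsilon>) \<longleftrightarrow>
        (\<forall>\<delta>>0. \<exists>S\<in>lin_span X. tnorm_sq n (\<lambda>xs. T xs - S xs) < \<delta>)"
  proof (intro iffI allI impI)
    fix \<delta> :: real assume approx: "\<forall>\<epsilon>>0. \<exists>S\<in>lin_span X. tnorm n (\<lambda>xs. T xs - S xs) < \<epsilon>"
      and "0 < \<delta>"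
    then have "0 < sqrt \<delta>" by simp
    then obtain S where "S \<in> lin_span X" "tnorm n (\<lambda>xs. T xs - S xs) < sqrt \<delta>"
      using approx by blast
    then show "\<exists>S\<in>lin_span X. tnorm_sq n (\<lambda>xs. T xs - S xs) < \<delta>"
      using tnorm_less[of "sqrt \<delta>"] \<open>0 < sqrt \<delta>\<close> \<open>0 < \<delta>\<close> by auto
  next
    fix \<epsilon> :: real assume approx: "\<forall>\<delta>>0. \<exists>S\<in>lin_span X. tnorm_sq n (\<lambda>xs. T xs - S xs) < \<delta>"
      and "0 < \<epsilon>"
    then obtain S where "S \<in> lin_span X" "tnorm_sq n (\<lambda>xs. T xs - S xs) < \<epsilon>\<^sup>2"
      by (meson zero_less_power)
    then show "\<exists>S\<in>lin_span X. tnorm n (\<lambda>xs. T xs - S xs) < \<epsilon>"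
      using tnorm_less[of \<epsilon>] \<open>0 < \<epsilon>\<close> by auto
  qed
  then show ?thesis unfolding closed_span_def by auto
qed

lemma closed_span_subset_tensor_power: "T \<in> closed_span n X \<Longrightarrow> T \<in> tensor_power n"
  unfolding closed_span_def by auto

lemma closed_span_zero: "(\<lambda>_. 0) \<in> closed_span n X"
  unfolding closed_span_iff using tensor_power_zero lin_span_zero
  by (auto intro!: bexI[of _ "\<lambda>_. 0"] simp: tnorm_sq_zero)

lemma lin_span_mono: "X \<subseteq> Y \<Longrightarrow> lin_span X \<subseteq> lin_span Y"
  unfolding lin_span_def by blast

lemma closed_span_mono: "X \<subseteq> Y \<Longrightarrow> closed_span n X \<subseteq> closed_span n Y"
  unfolding closed_span_def using lin_span_mono by blast

lemma closed_span_add: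
  assumes X: "X \<subseteq> tensor_power n" and T1: "T1 \<in> closed_span n X" and T2: "T2 \<in> closed_span n X"
  shows "(\<lambda>xs. T1 xs + T2 xs) \<in> closed_span n X"
  unfolding closed_span_iff
proof (intro conjI allI impI)
  show "(\<lambda>xs. T1 xs + T2 xs) \<in> tensor_power n"
    using tensor_power_add closed_span_subset_tensor_power T1 T2 by blast
  fix \<delta> :: real assume "\<delta> > 0"
  then obtain S1 S2 where S1: "S1 \<in> lin_span X" "tnorm_sq n (\<lambda>xs. T1 xs - S1 xs) < \<delta>/4"
    and S2: "S2 \<in> lin_span X" "tnorm_sq n (\<lambda>xs. T2 xs - S2 xs) < \<delta>/4"
    using T1 T2 unfolding closed_span_iff by (meson zero_less_divide_iff zero_less_numeral)
  have "(\<lambda>xs. T1 xs - S1 xs) \<in> tensor_power n" "(\<lambda>xs. T2 xs - S2 xs) \<in> tensor_power n"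
    using closed_span_subset_tensor_power[OF T1] closed_span_subset_tensor_power[OF T2]
      lin_span_subset_tensor_power[OF X S1(1)] lin_span_subset_tensor_power[OF X S2(1)]
    by (simp_all add: tensor_power_diff)
  from tnorm_sq_add_le[OF this]
  have "tnorm_sq n (\<lambda>xs. T1 xs + T2 xs - (S1 xs + S2 xs)) < \<delta>"
    using S1(2) S2(2) by (simp add: algebra_simps)
  then show "\<exists>S\<in>lin_span X. tnorm_sq n (\<lambda>xs. T1 xs + T2 xs - S xs) < \<delta>"
    using lin_span_add[OF S1(1) S2(1)] by (intro bexI[of _ "\<lambda>xs. S1 xs + S2 xs"]) simp_all
qed

lemma closed_span_map:
  assumes X: "X \<subseteq> tensor_power n"
    and add: "\<And>a b. F (\<lambda>xs. a xs + b xs) = (\<lambda>xs. F a xs + F b xs)"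
    and scale: "\<And>a c. F (\<lambda>xs. c * a xs) = (\<lambda>xs. c * F a xs)"
    and tensor_power: "\<And>d. d \<in> tensor_power n \<Longrightarrow> F d \<in> tensor_power n"
    and bounded: "\<And>d. d \<in> tensor_power n \<Longrightarrow> tnorm_sq n (F d) \<le> M * tnorm_sq n d"
    and generators: "\<And>g. g \<in> X \<Longrightarrow> F g \<in> lin_span Y"
    and T: "T \<in> closed_span n X"
  shows "F T \<in> closed_span n Y"
proof -
  have F_lin_span: "F S \<in> lin_span Y" if "S \<in> lin_span X" for S
    using that
  proof (induction rule: lin_span_induct)
    case zero then show ?case using scale[of 0 "\<lambda>_. 0"] lin_span_zero by simp
  next
    case (add_base G g a)
    then show ?case
      using add[of G "\<lambda>xs. a * g xs"] scale[of a g]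
        lin_span_add[OF _ lin_span_scale[OF generators]] by simp
  qed
  have F_diff: "F (\<lambda>xs. A xs - B xs) = (\<lambda>xs. F A xs - F B xs)" for A B
    using add[of A "\<lambda>xs. (-1) * B xs"] scale[of "-1" B] by simp
  show ?thesis unfolding closed_span_iff
  proof (intro conjI allI impI)
    show "F T \<in> tensor_power n" using tensor_power closed_span_subset_tensor_power T by blast
    fix \<delta> :: real assume "\<delta> > 0"
    then have "0 < \<delta> / (\<bar>M\<bar> + 1)" by simp
    then obtain S where S: "S \<in> lin_span X" "tnorm_sq n (\<lambda>xs. T xs - S xs) < \<delta> / (\<bar>M\<bar> + 1)"
      using T unfolding closed_span_iff by blast
    have D: "(\<lambda>xs. T xs - S xs) \<in> tensor_power n"
      using closed_span_subset_tensor_power[OF T] lin_span_subset_tensor_power[OF X S(1)]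
      by (rule tensor_power_diff)
    have "tnorm_sq n (\<lambda>xs. F T xs - F S xs) = tnorm_sq n (F (\<lambda>xs. T xs - S xs))"
      by (simp add: F_diff)
    also have "\<dots> \<le> M * tnorm_sq n (\<lambda>xs. T xs - S xs)" by (rule bounded[OF D])
    also have "\<dots> \<le> (\<bar>M\<bar> + 1) * tnorm_sq n (\<lambda>xs. T xs - S xs)"
      by (intro mult_right_mono tnorm_sq_nonneg) simp
    also have "\<dots> < \<delta>"
      using S(2) by (simp add: pos_less_divide_eq mult.commute)
    finally show "\<exists>S\<in>lin_span Y. tnorm_sq n (\<lambda>xs. F T xs - S xs) < \<delta>"
      using F_lin_span[OF S(1)] by blast
  qed
qed

lemma tinner_lin_span_orthogonal_left:
  assumes X: "X \<subseteq> tensor_power n" and b: "b \<in> tensor_power n"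
    and orth: "\<And>x. x \<in> X \<Longrightarrow> tinner n x b = 0" and g: "g \<in> lin_span X"
  shows "tinner n g b = 0"
  using g
proof (induction rule: lin_span_induct)
  case (add_base F x c)
  then have "F \<in> tensor_power n" "(\<lambda>xs. c * x xs) \<in> tensor_power n"
    using X lin_span_subset_tensor_power tensor_power_scale by blast+
  then show ?case
    using add_base orth[OF add_base(2)] b by (simp add: tinner_add_left tinner_scale_left)
qed (rule tinner_zero_left)

lemma tinner_closed_span_orthogonal_left:
  assumes X: "X \<subseteq> tensor_power n" and a: "a \<in> closed_span n X" and b: "b \<in> tensor_power n"
    and orth: "\<And>x. x \<in> X \<Longrightarrow> tinner n x b = 0"
  shows "tinner n a b = 0"
proof -
  have "\<bar>tinner n a b\<bar> \<le> 0 + \<epsilon>" if \<epsilon>: "\<epsilon> > 0" for \<epsilon>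
  proof -
    define c where "c = (tnorm_sq n b + 1) / \<epsilon>"
    have c: "c > 0" unfolding c_def using \<epsilon> tnorm_sq_nonneg[of n b] by simp
    then have "0 < \<epsilon> / c" using \<epsilon> by simp
    then obtain g where g: "g \<in> lin_span X" "tnorm_sq n (\<lambda>xs. a xs - g xs) < \<epsilon> / c"
      using a unfolding closed_span_iff by blast
    have a_tp: "a \<in> tensor_power n" using closed_span_subset_tensor_power[OF a] .
    have g_tp: "g \<in> tensor_power n" using lin_span_subset_tensor_power[OF X g(1)] .
    have "tinner n a b = tinner n (\<lambda>xs. a xs - g xs) b"
      using tinner_diff_left[OF a_tp g_tp b] tinner_lin_span_orthogonal_left[OF X b orth g(1)] by simp
    then have "2 * \<bar>tinner n a b\<bar> \<le> c * tnorm_sq n (\<lambda>xs. a xs - g xs) + tnorm_sq n b / c"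
      using abs_tinner_le[OF tensor_power_diff[OF a_tp g_tp] b c] by simp
    also have "\<dots> < \<epsilon> + \<epsilon>"
    proof (rule add_less_le_mono)
      show "c * tnorm_sq n (\<lambda>xs. a xs - g xs) < \<epsilon>"
        using g(2) c by (simp add: less_divide_eq mult.commute)
      show "tnorm_sq n b / c \<le> \<epsilon>"
        using \<epsilon> tnorm_sq_nonneg[of n b] unfolding c_def by (simp add: field_simps)
    qed
    finally show ?thesis by simp
  qed
  then have "\<bar>tinner n a b\<bar> \<le> 0" by (rule field_le_epsilon)
  then show ?thesis by simp
qed

lemma tinner_closed_span_orthogonal:
  assumes X: "X \<subseteq> tensor_power n" and Y: "Y \<subseteq> tensor_power n"
    and orth: "\<And>x y. x \<in> X \<Longrightarrow> y \<in> Y \<Longrightarrow> tinner n x y = 0"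
    and a: "a \<in> closed_span n X" and b: "b \<in> closed_span n Y"
  shows "tinner n a b = 0"
proof (rule tinner_closed_span_orthogonal_left[OF X a closed_span_subset_tensor_power[OF b]])
  fix x assume x: "x \<in> X"
  have "tinner n b x = 0"
    using X x orth[OF x] tinner_commute[of n _ x]
    by (intro tinner_closed_span_orthogonal_left[OF Y b]) auto
  then show "tinner n x b = 0" by (simp add: tinner_commute)
qed


section \<open>Forms with prescribed symmetry\<close>

definition semi_invariant :: "nat set \<Rightarrow> ((nat \<Rightarrow> nat) \<Rightarrow> real) \<Rightarrow> ('a list \<Rightarrow> real) \<Rightarrow> bool" where
  "semi_invariant R \<gamma> T \<longleftrightarrow> (\<forall>\<pi>. \<pi> permutes R \<longrightarrow> permute_form \<pi> T = (\<lambda>xs. \<gamma> \<pi> * T xs))"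

lemma semi_invariantD:
  "semi_invariant R \<gamma> T \<Longrightarrow> \<pi> permutes R \<Longrightarrow> permute_form \<pi> T = (\<lambda>xs. \<gamma> \<pi> * T xs)"
  unfolding semi_invariant_def by blast

lemma semi_invariant_subset:
  "semi_invariant R \<gamma> T \<Longrightarrow> R' \<subseteq> R \<Longrightarrow> semi_invariant R' \<gamma> T"
  unfolding semi_invariant_def using permutes_subset by blast

lemma semi_invariant_singleton: "\<gamma> id = 1 \<Longrightarrow> semi_invariant {i} \<gamma> T"
  unfolding semi_invariant_def permute_form_def by simp

lemma sym_skew_in_iff_semi_invariant:
  assumes T: "T \<in> tensor_power n"
  shows "sym_skew_in n S T \<longleftrightarrow> semi_invariant S (\<lambda>_. 1) T \<and> semi_invariant ({0..<n} - S) rsign T"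
proof -
  have on_length: "(\<forall>xs. length xs = n \<longrightarrow> T (permute_list \<pi> xs) = c * T xs)
                   \<longleftrightarrow> permute_form \<pi> T = (\<lambda>xs. c * T xs)" for \<pi> c
  proof
    assume eq: "\<forall>xs. length xs = n \<longrightarrow> T (permute_list \<pi> xs) = c * T xs"
    show "permute_form \<pi> T = (\<lambda>xs. c * T xs)"
    proof
      fix xs :: "'a list"
      show "permute_form \<pi> T xs = c * T xs"
        using eq tensor_powerD(1)[OF T, of xs] tensor_powerD(1)[OF T, of "permute_list \<pi> xs"]
        by (cases "length xs = n") (simp_all add: permute_form_def)
    qed
  qed (simp add: permute_form_def fun_eq_iff)
  have "sym_skew_in n S T \<longleftrightarrow>
          (\<forall>\<pi>. \<pi> permutes S \<longrightarrow> (\<forall>xs. length xs = n \<longrightarrow> T (permute_list \<pi> xs) = 1 * T xs)) \<and>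
          (\<forall>\<pi>. \<pi> permutes {0..<n} - S \<longrightarrow>
             (\<forall>xs. length xs = n \<longrightarrow> T (permute_list \<pi> xs) = rsign \<pi> * T xs))"
    unfolding sym_skew_in_def by auto
  then show ?thesis unfolding on_length semi_invariant_def .
qed

lemma semi_invariant_if_transpositions:
  assumes T: "T \<in> tensor_power n" and A: "A \<subseteq> {0..<n}"
    and \<gamma>_id: "\<gamma> id = 1"
    and \<gamma>_comp: "\<And>a b p. a \<in> A \<Longrightarrow> b \<in> A \<Longrightarrow> a \<noteq> b \<Longrightarrow> p permutes A \<Longrightarrow>
                    \<gamma> (transposition a b \<circ> p) = c * \<gamma> p"
    and transpositions: "\<And>a b. a \<in> A \<Longrightarrow> b \<in> A \<Longrightarrow> a \<noteq> b \<Longrightarrow>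
                    permute_form (transposition a b) T = (\<lambda>xs. c * T xs)"
  shows "semi_invariant A \<gamma> T"
  unfolding semi_invariant_def
proof (intro allI impI)
  fix \<pi> assume "\<pi> permutes A"
  then show "permute_form \<pi> T = (\<lambda>xs. \<gamma> \<pi> * T xs)"
    using finite_subset[OF A finite_atLeastLessThan]
  proof (induction rule: permutes_induct)
    case id then show ?case using \<gamma>_id by (simp add: permute_form_def id_def)
  next
    case (swap a b p)
    have "permute_form (transposition a b \<circ> p) T = permute_form (transposition a b) (\<lambda>xs. \<gamma> p * T xs)"
      using permute_form_comp[OF T permutes_subset[OF swap(4) A]] swap(5) by simp
    also have "\<dots> = (\<lambda>xs. \<gamma> p * (c * T xs))"
      using transpositions[OF swap(1-3)] by (simp add: permute_form_scale)
    also have "\<dots> = (\<lambda>xs. \<gamma> (transposition a b \<circ> p) * T xs)"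
      using \<gamma>_comp[OF swap(1-4)] by (simp add: mult_ac)
    finally show ?case .
  qed
qed

lemma permutes_conjugate:
  assumes \<sigma>: "\<sigma> permutes U" and A: "finite A" and \<pi>: "\<pi> permutes \<sigma> ` A"
  shows "inv \<sigma> \<circ> \<pi> \<circ> \<sigma> permutes A"
proof (rule inj_imp_permutes[OF _ A])
  show "inj_on (inv \<sigma> \<circ> \<pi> \<circ> \<sigma>) A"
    using permutes_inj[OF \<sigma>] permutes_inj[OF \<pi>] permutes_inj[OF permutes_inv[OF \<sigma>]]
    by (simp add: inj_compose inj_on_subset[of _ UNIV])
  show "(inv \<sigma> \<circ> \<pi> \<circ> \<sigma>) x \<in> A" if "x \<in> A" for x
  proof -
    have "\<pi> (\<sigma> x) \<in> \<sigma> ` A" using permutes_in_image[OF \<pi>] that by auto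
    then obtain y where "y \<in> A" "\<pi> (\<sigma> x) = \<sigma> y" by auto
    then show ?thesis using permutes_inverses(2)[OF \<sigma>] by simp
  qed
  show "(inv \<sigma> \<circ> \<pi> \<circ> \<sigma>) x = x" if "x \<notin> A" for x
  proof -
    have "\<sigma> x \<notin> \<sigma> ` A" using that permutes_inj[OF \<sigma>] by (auto dest: injD)
    then show ?thesis using permutes_not_in[OF \<pi>] permutes_inverses(2)[OF \<sigma>] by simp
  qed
qed

lemma semi_invariant_permute:
  assumes T: "T \<in> tensor_power n" and \<sigma>: "\<sigma> permutes {0..<n}" and A: "A \<subseteq> {0..<n}"
    and semi: "semi_invariant A \<gamma> T"
    and \<gamma>_conj: "\<And>\<pi>. \<pi> permutes \<sigma> ` A \<Longrightarrow> \<gamma> (inv \<sigma> \<circ> \<pi> \<circ> \<sigma>) = \<gamma> \<pi>"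
  shows "semi_invariant (\<sigma> ` A) \<gamma> (permute_form \<sigma> T)"
  unfolding semi_invariant_def
proof (intro allI impI)
  fix \<pi> assume \<pi>: "\<pi> permutes \<sigma> ` A"
  define \<rho> where "\<rho> = inv \<sigma> \<circ> \<pi> \<circ> \<sigma>"
  have \<rho>: "\<rho> permutes A"
    unfolding \<rho>_def using permutes_conjugate[OF \<sigma> finite_subset[OF A] \<pi>] by simp
  have "\<pi> \<circ> \<sigma> = \<sigma> \<circ> \<rho>"
    unfolding \<rho>_def using permutes_inverses(1)[OF \<sigma>] by (auto simp: fun_eq_iff)
  then have "permute_form \<pi> (permute_form \<sigma> T) = permute_form \<sigma> (permute_form \<rho> T)"
    using permute_form_comp[OF T \<sigma>] permute_form_comp[OF T permutes_subset[OF \<rho> A]] by metis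
  also have "\<dots> = (\<lambda>xs. \<gamma> \<pi> * permute_form \<sigma> T xs)"
    using semi_invariantD[OF semi \<rho>] \<gamma>_conj[OF \<pi>] by (simp add: \<rho>_def permute_form_scale)
  finally show "permute_form \<pi> (permute_form \<sigma> T) = (\<lambda>xs. \<gamma> \<pi> * permute_form \<sigma> T xs)" .
qed

lemma rsign_conjugate:
  assumes \<sigma>: "\<sigma> permutes {0..<n}" and \<pi>: "\<pi> permutes B" "finite B"
  shows "rsign (inv \<sigma> \<circ> \<pi> \<circ> \<sigma>) = rsign \<pi>"
proof -
  have p: "permutation \<sigma>" "permutation \<pi>" "permutation (inv \<sigma>)"
    using permutes_imp_permutation \<sigma> \<pi> permutes_inv[OF \<sigma>] by blast+
  then have "sign (inv \<sigma> \<circ> \<pi> \<circ> \<sigma>) = sign \<pi> * (sign \<sigma> * sign \<sigma>)"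
    by (simp add: sign_compose permutation_compose sign_inverse)
  then show ?thesis by (simp add: sign_def)
qed

lemma sym_skew_in_permute:
  assumes T: "T \<in> tensor_power n" and \<sigma>: "\<sigma> permutes {0..<n}" and S: "S \<subseteq> {0..<n}"
    and "sym_skew_in n S T"
  shows "sym_skew_in n (\<sigma> ` S) (permute_form \<sigma> T)"
proof -
  have "\<sigma> ` ({0..<n} - S) = {0..<n} - \<sigma> ` S"
    using permutes_image[OF \<sigma>] permutes_inj[OF \<sigma>] by (metis image_set_diff)
  moreover have "semi_invariant (\<sigma> ` S) (\<lambda>_. 1) (permute_form \<sigma> T)"
    using assms sym_skew_in_iff_semi_invariant[OF T] by (intro semi_invariant_permute) auto
  moreover have "semi_invariant (\<sigma> ` ({0..<n} - S)) rsign (permute_form \<sigma> T)"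
    using assms sym_skew_in_iff_semi_invariant[OF T]
    by (intro semi_invariant_permute rsign_conjugate) (auto intro: finite_subset)
  ultimately show ?thesis
    using sym_skew_in_iff_semi_invariant[OF tensor_power_permute[OF T \<sigma>]] by simp
qed

definition sym_skew_forms :: "nat \<Rightarrow> nat \<Rightarrow> ('a::real_inner list \<Rightarrow> real) set" where
  "sym_skew_forms n m = {T \<in> tensor_power n. \<exists>S. S \<subseteq> {0..<n} \<and> card S = m \<and> sym_skew_in n S T}"

lemma sym_skew_formsE:
  assumes "T \<in> sym_skew_forms n m"
  obtains S where "T \<in> tensor_power n" "S \<subseteq> {0..<n}" "card S = m" "sym_skew_in n S T"
  using assms unfolding sym_skew_forms_def by blast

lemma sym_skew_forms_subset_tensor_power: "sym_skew_forms n m \<subseteq> tensor_power n"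
  unfolding sym_skew_forms_def by auto

lemma sym_skew_forms_permute:
  assumes T: "T \<in> sym_skew_forms n m" and \<sigma>: "\<sigma> permutes {0..<n}"
  shows "permute_form \<sigma> T \<in> sym_skew_forms n m"
proof -
  obtain S where S: "T \<in> tensor_power n" "S \<subseteq> {0..<n}" "card S = m" "sym_skew_in n S T"
    using sym_skew_formsE[OF T] by blast
  moreover have "card (\<sigma> ` S) = m" using S(3) card_image[OF permutes_inj_on[OF \<sigma>]] by simp
  moreover have "\<sigma> ` S \<subseteq> {0..<n}" using S(2) permutes_image[OF \<sigma>] by blast
  ultimately show ?thesis
    using sym_skew_in_permute[OF S(1) \<sigma> S(2,4)] tensor_power_permute[OF S(1) \<sigma>]
    unfolding sym_skew_forms_def by blast
qed

lemma sym_skew_space_eq_closed_span: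
  "sym_skew_space (int m) (int p) = closed_span (m + p) (sym_skew_forms (m + p) m)"
  unfolding sym_skew_space_def sym_skew_forms_def Let_def
  by (simp add: nat_add_distrib) (rule arg_cong[where f="closed_span (m + p)"], blast)

lemma sym_skew_space_negative: "m < 0 \<or> p < 0 \<Longrightarrow> sym_skew_space m p = {\<lambda>_. 0}"
  unfolding sym_skew_space_def by auto

text \<open>The only permutation of a single position is the identity, so a form symmetric in all
  positions is also skew in any one of them, and vice versa.\<close>

lemma sym_skew_forms_all_sym_subset:
  assumes "1 \<le> n"
  shows "sym_skew_forms n n \<subseteq> sym_skew_forms n (n - 1)"
proof
  fix T assume "T \<in> sym_skew_forms n n"
  then obtain S where S: "T \<in> tensor_power n" "S \<subseteq> {0..<n}" "card S = n" "sym_skew_in n S T"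
    by (rule sym_skew_formsE)
  have "S = {0..<n}" using card_subset_eq[OF _ S(2)] S(3) by simp
  then have "semi_invariant ({0..<n} - {0}) (\<lambda>_. 1) T"
    using S(4) sym_skew_in_iff_semi_invariant[OF S(1)] semi_invariant_subset by blast
  moreover have "{0..<n} - ({0..<n} - {0}) = {0}" using assms by auto
  ultimately have "sym_skew_in n ({0..<n} - {0}) T"
    using sym_skew_in_iff_semi_invariant[OF S(1)] semi_invariant_singleton[of rsign] by simp
  moreover have "card ({0..<n} - {0}) = n - 1" using assms by simp
  ultimately show "T \<in> sym_skew_forms n (n - 1)"
    using S(1) unfolding sym_skew_forms_def by blast
qed

lemma sym_skew_forms_all_skew_subset:
  assumes "1 \<le> n"
  shows "sym_skew_forms n 0 \<subseteq> sym_skew_forms n 1"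
proof
  fix T assume "T \<in> sym_skew_forms n 0"
  then obtain S where S: "T \<in> tensor_power n" "S \<subseteq> {0..<n}" "card S = 0" "sym_skew_in n S T"
    by (rule sym_skew_formsE)
  have "S = {}" using S(2,3) finite_subset by fastforce
  then have "semi_invariant ({0..<n} - {0}) rsign T"
    using S(4) sym_skew_in_iff_semi_invariant[OF S(1)] semi_invariant_subset by blast
  then have "sym_skew_in n {0} T"
    using sym_skew_in_iff_semi_invariant[OF S(1)] semi_invariant_singleton[of "\<lambda>_. 1"] by simp
  then show "T \<in> sym_skew_forms n 1"
    using S(1) assms unfolding sym_skew_forms_def by force
qed


section \<open>Moving one position between the symmetric and the skew block\<close>

text \<open>
  The sum over the coset representatives \<open>id\<close> and \<open>(s t)\<close>, \<open>s \<in> R\<close>, of the permutation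
  group of \<open>R\<close> in that of \<open>R \<union> {t}\<close>, weighted by the value \<open>c\<close> of the character on
  transpositions.
\<close>

definition coset_sum :: "real \<Rightarrow> nat set \<Rightarrow> nat \<Rightarrow> ('a list \<Rightarrow> real) \<Rightarrow> 'a list \<Rightarrow> real" where
  "coset_sum c R t T = (\<lambda>xs. T xs + c * (\<Sum>s\<in>R. permute_form (transposition s t) T xs))"

lemma coset_sum_tensor_power:
  assumes "T \<in> tensor_power n" "R \<subseteq> {0..<n}" "R' \<subseteq> {0..<n}" "t \<in> R'"
  shows "coset_sum c R t T \<in> tensor_power n"
  unfolding coset_sum_def using assms
  by (intro tensor_power_add tensor_power_scale tensor_power_sum tensor_power_permute permutes_swap_id)
    auto

context
  fixes T :: "'a::real_inner list \<Rightarrow> real" and n t :: nat and R R' :: "nat set"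
    and \<gamma> \<gamma>' :: "(nat \<Rightarrow> nat) \<Rightarrow> real" and c :: real
  assumes T: "T \<in> tensor_power n"
    and R: "R \<subseteq> {0..<n}" and R': "R' \<subseteq> {0..<n}" and disjoint: "R \<inter> R' = {}" and t: "t \<in> R'"
    and semi_R: "semi_invariant R \<gamma> T" and semi_R': "semi_invariant R' \<gamma>' T"
    and \<gamma>_id: "\<gamma> id = 1"
    and \<gamma>_comp: "\<And>a b p. a \<noteq> b \<Longrightarrow> p permutes insert t R \<Longrightarrow> \<gamma> (transposition a b \<circ> p) = c * \<gamma> p"
    and c_square: "c * c = 1"
begin

private lemma transposition_permutes: "s \<in> R \<Longrightarrow> transposition s t permutes {0..<n}"
  using R R' t by (intro permutes_swap_id) auto

private lemma character_transposition: "a \<noteq> b \<Longrightarrow> \<gamma> (transposition a b) = c"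
  using \<gamma>_comp[of a b id] \<gamma>_id by simp

private lemma permute_form_coset_sum:
  "permute_form \<sigma> (coset_sum c R t T) =
     (\<lambda>xs. permute_form \<sigma> T xs + c * (\<Sum>s\<in>R. permute_form \<sigma> (permute_form (transposition s t) T) xs))"
  unfolding coset_sum_def by (simp add: permute_form_def)

private lemma permute_coset_sum_transposition_to_t:
  assumes a: "a \<in> R"
  shows "permute_form (transposition a t) (coset_sum c R t T) = (\<lambda>xs. c * coset_sum c R t T xs)"
proof -
  have "a \<noteq> t" using a t disjoint by auto
  have other: "permute_form (transposition a t) (permute_form (transposition s t) T)
               = (\<lambda>xs. c * permute_form (transposition s t) T xs)" if s: "s \<in> R - {a}" for s
  proof -
    have "s \<noteq> t" using s t disjoint by auto
    have as: "transposition a s permutes R" using a s by (intro permutes_swap_id) auto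
    have "transposition a t \<circ> transposition s t = transposition s t \<circ> transposition a s"
      using \<open>a \<noteq> t\<close> s by (intro swap_id_common') auto
    then have "permute_form (transposition a t) (permute_form (transposition s t) T)
               = permute_form (transposition s t) (permute_form (transposition a s) T)"
      using permute_form_comp[OF T transposition_permutes, of s "transposition a t"]
        permute_form_comp[OF T permutes_subset[OF as R], of "transposition s t"] s
      by simp
    then show ?thesis
      using semi_invariantD[OF semi_R as] character_transposition s by (simp add: permute_form_scale)
  qed
  have "permute_form (transposition a t) (permute_form (transposition a t) T)
        = permute_form (transposition a t \<circ> transposition a t) T"
    using permute_form_comp[OF T transposition_permutes[OF a]] by (rule sym)
  then have self: "permute_form (transposition a t) (permute_form (transposition a t) T) = T"
    by (simp add: permute_form_def)
  have R_split: "(\<Sum>s\<in>R. f s) = f a + (\<Sum>s\<in>R - {a}. f s)" for f :: "nat \<Rightarrow> real"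
    using sum.remove[OF finite_subset[OF R] a] by simp
  have cc: "c * (c * y) = y" for y using c_square by (simp flip: mult.assoc)
  show ?thesis
  proof
    fix xs
    define X where "X = (\<Sum>s\<in>R - {a}. permute_form (transposition s t) T xs)"
    let ?P = "\<lambda>s. permute_form (transposition a t) (permute_form (transposition s t) T) xs"
    have "(\<Sum>s\<in>R. ?P s) = ?P a + (\<Sum>s\<in>R - {a}. ?P s)" by (rule R_split)
    also have "(\<Sum>s\<in>R - {a}. ?P s) = c * X"
      unfolding X_def sum_distrib_left using other by (auto intro: sum.cong)
    finally have "permute_form (transposition a t) (coset_sum c R t T) xs
                  = permute_form (transposition a t) T xs + c * (T xs + c * X)"
      by (simp add: permute_form_coset_sum self)
    moreover have "coset_sum c R t T xs = T xs + c * (permute_form (transposition a t) T xs + X)"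
      unfolding coset_sum_def X_def using R_split by simp
    ultimately show "permute_form (transposition a t) (coset_sum c R t T) xs = c * coset_sum c R t T xs"
      by (simp add: algebra_simps cc)
  qed
qed

private lemma permute_coset_sum_transposition_within:
  assumes a: "a \<in> R" and b: "b \<in> R" and "a \<noteq> b"
  shows "permute_form (transposition a b) (coset_sum c R t T) = (\<lambda>xs. c * coset_sum c R t T xs)"
proof -
  have ab: "transposition a b permutes R" using a b by (intro permutes_swap_id)
  have "t \<noteq> a" "t \<noteq> b" using a b t disjoint by auto
  have conj: "permute_form (transposition a b) (permute_form (transposition s t) T)
              = (\<lambda>xs. c * permute_form (transposition (transposition a b s) t) T xs)" if s: "s \<in> R" for s
  proof -
    have "transposition a b \<circ> transposition s t = transposition (transposition a b s) t \<circ> transposition a b"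
      using \<open>t \<noteq> a\<close> \<open>t \<noteq> b\<close> by (auto simp: fun_eq_iff Transposition.transpose_def)
    then have "permute_form (transposition a b) (permute_form (transposition s t) T)
               = permute_form (transposition (transposition a b s) t) (permute_form (transposition a b) T)"
      using permute_form_comp[OF T transposition_permutes[OF s], of "transposition a b"]
        permute_form_comp[OF T permutes_subset[OF ab R], of "transposition (transposition a b s) t"]
      by simp
    then show ?thesis
      using semi_invariantD[OF semi_R ab] character_transposition[OF \<open>a \<noteq> b\<close>] by (simp add: permute_form_scale)
  qed
  have reindex: "(\<Sum>s\<in>R. f (transposition a b s)) = (\<Sum>s\<in>R. f s)" for f :: "nat \<Rightarrow> real"
    using sum.reindex_bij_betw[OF permutes_imp_bij[OF ab]] .
  show ?thesis
  proof
    fix xs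
    have "(\<Sum>s\<in>R. permute_form (transposition a b) (permute_form (transposition s t) T) xs)
          = c * (\<Sum>s\<in>R. permute_form (transposition s t) T xs)"
      using conj reindex[of "\<lambda>s. permute_form (transposition s t) T xs"]
      by (simp add: sum_distrib_left[symmetric])
    moreover have "permute_form (transposition a b) T xs = c * T xs"
      using semi_invariantD[OF semi_R ab] character_transposition[OF \<open>a \<noteq> b\<close>] by simp
    ultimately show "permute_form (transposition a b) (coset_sum c R t T) xs = c * coset_sum c R t T xs"
      unfolding permute_form_coset_sum by (simp add: coset_sum_def algebra_simps)
  qed
qed

lemma semi_invariant_coset_sum: "semi_invariant (insert t R) \<gamma> (coset_sum c R t T)"
proof (rule semi_invariant_if_transpositions[OF coset_sum_tensor_power[OF T R R' t] _ \<gamma>_id \<gamma>_comp])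
  show "insert t R \<subseteq> {0..<n}" using R R' t by auto
  fix a b assume "a \<in> insert t R" "b \<in> insert t R" "a \<noteq> b"
  then consider "a \<in> R" "b \<in> R" | "a \<in> R" "b = t" | "a = t" "b \<in> R" by auto
  then show "permute_form (transposition a b) (coset_sum c R t T) = (\<lambda>xs. c * coset_sum c R t T xs)"
    using \<open>a \<noteq> b\<close> permute_coset_sum_transposition_to_t permute_coset_sum_transposition_within
    by cases (auto simp: transpose_commute)
qed

lemma semi_invariant_coset_sum_complement: "semi_invariant (R' - {t}) \<gamma>' (coset_sum c R t T)"
  unfolding semi_invariant_def
proof (intro allI impI)
  fix \<pi> assume \<pi>: "\<pi> permutes R' - {t}"
  then have \<pi>R': "\<pi> permutes R'" by (rule permutes_subset) blast
  have commute: "permute_form \<pi> (permute_form (transposition s t) T)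
                 = (\<lambda>xs. \<gamma>' \<pi> * permute_form (transposition s t) T xs)" if s: "s \<in> R" for s
  proof -
    have "\<pi> s = s" "\<pi> t = t" using permutes_not_in[OF \<pi>] s disjoint by auto
    then have "inv \<pi> s = s" "inv \<pi> t = t" using permutes_inv_eq[OF \<pi>] by auto
    then have "\<pi> \<circ> transposition s t = transposition s t \<circ> \<pi>"
      using transpose_comp_eq[OF permutes_bij[OF \<pi>], of s t] by simp
    then show ?thesis
      using permute_form_comp[OF T transposition_permutes[OF s]] permute_form_comp[OF T permutes_subset[OF \<pi>R' R']]
        semi_invariantD[OF semi_R' \<pi>R'] by (metis permute_form_scale)
  qed
  show "permute_form \<pi> (coset_sum c R t T) = (\<lambda>xs. \<gamma>' \<pi> * coset_sum c R t T xs)"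
    unfolding permute_form_coset_sum semi_invariantD[OF semi_R' \<pi>R']
    by (simp add: commute coset_sum_def sum_distrib_left algebra_simps)
qed

end


section \<open>The sum of all transpositions on a generator\<close>

definition transposition_sum :: "nat \<Rightarrow> ('a list \<Rightarrow> real) \<Rightarrow> 'a list \<Rightarrow> real" where
  "transposition_sum n T =
     (\<lambda>xs. \<Sum>i\<in>{0..<n}. \<Sum>j\<in>{0..<n} - {i}. permute_form (transposition i j) T xs)"

definition cross_sum :: "nat set \<Rightarrow> nat set \<Rightarrow> ('a list \<Rightarrow> real) \<Rightarrow> 'a list \<Rightarrow> real" where
  "cross_sum S S' T = (\<lambda>xs. \<Sum>s\<in>S. \<Sum>t\<in>S'. permute_form (transposition s t) T xs)"

definition raising_coeff :: "nat \<Rightarrow> nat \<Rightarrow> real" where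
  "raising_coeff k q = (real q - (real k * (real k - 1) - real q * (real q - 1)) / 2) / real (k + q)"

definition transposition_comb :: "nat \<Rightarrow> real \<Rightarrow> real \<Rightarrow> ('a list \<Rightarrow> real) \<Rightarrow> 'a list \<Rightarrow> real" where
  "transposition_comb n \<alpha> \<beta> T = (\<lambda>xs. \<alpha> * T xs + \<beta> * transposition_sum n T xs)"

context
  fixes T :: "'a::real_inner list \<Rightarrow> real" and n k q :: nat and S S' :: "nat set"
  assumes T: "T \<in> tensor_power n"
    and partition: "S \<union> S' = {0..<n}" "S \<inter> S' = {}"
    and card_S: "card S = k" and card_S': "card S' = q"
    and sym: "semi_invariant S (\<lambda>_. 1) T" and skew: "semi_invariant S' rsign T"
begin

private lemma finite_blocks: "finite S" "finite S'"
  using partition(1) by (metis finite_Un finite_atLeastLessThan)+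

private lemma subsets: "S \<subseteq> {0..<n}" "S' \<subseteq> {0..<n}"
  using partition(1) by auto

private lemma n_eq: "n = k + q"
  using card_Un_disjoint[OF finite_blocks partition(2)] partition(1) card_S card_S' by simp

lemma coset_sum_raises:
  assumes t: "t \<in> S'"
  shows "coset_sum 1 S t T \<in> sym_skew_forms n (Suc k)"
proof -
  have tp: "coset_sum 1 S t T \<in> tensor_power n"
    using coset_sum_tensor_power[OF T subsets t] .
  have "semi_invariant (insert t S) (\<lambda>_. 1) (coset_sum 1 S t T)"
    by (rule semi_invariant_coset_sum[OF T subsets partition(2) t sym skew]) simp_all
  moreover have "semi_invariant (S' - {t}) rsign (coset_sum 1 S t T)"
    by (rule semi_invariant_coset_sum_complement[OF T subsets partition(2) t sym skew]) simp_all
  moreover have "{0..<n} - insert t S = S' - {t}" using t partition by auto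
  ultimately have "sym_skew_in n (insert t S) (coset_sum 1 S t T)"
    using sym_skew_in_iff_semi_invariant[OF tp] by simp
  moreover have "t \<notin> S" using t partition(2) by blast
  then have "card (insert t S) = Suc k" using finite_blocks card_S by simp
  ultimately show ?thesis
    using subsets t tp unfolding sym_skew_forms_def by (intro CollectI conjI exI[of _ "insert t S"]) auto
qed

lemma coset_sum_lowers:
  assumes s: "s \<in> S"
  shows "coset_sum (-1) S' s T \<in> sym_skew_forms n (k - 1)"
proof -
  have disjoint: "S' \<inter> S = {}" using partition(2) by blast
  have tp: "coset_sum (-1) S' s T \<in> tensor_power n"
    using coset_sum_tensor_power[OF T subsets(2,1) s] .
  have rsign_comp: "rsign (transposition a b \<circ> p) = -1 * rsign p"
    if "a \<noteq> b" "p permutes insert s S'" for a b p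
    using that finite_blocks(2)
    by (simp add: sign_compose[OF permutation_swap_id permutes_imp_permutation[OF _ that(2)]] sign_swap_id)
  have "semi_invariant (insert s S') rsign (coset_sum (-1) S' s T)"
    by (rule semi_invariant_coset_sum[OF T subsets(2,1) disjoint s skew sym]) (simp_all add: rsign_comp)
  moreover have "semi_invariant (S - {s}) (\<lambda>_. 1) (coset_sum (-1) S' s T)"
    by (rule semi_invariant_coset_sum_complement[OF T subsets(2,1) disjoint s skew sym])
      (simp_all add: rsign_comp)
  moreover have "{0..<n} - (S - {s}) = insert s S'" using s partition by auto
  ultimately have "sym_skew_in n (S - {s}) (coset_sum (-1) S' s T)"
    using sym_skew_in_iff_semi_invariant[OF tp] by simp
  moreover have "card (S - {s}) = k - 1" using s finite_blocks card_S by simp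
  ultimately show ?thesis
    using subsets tp unfolding sym_skew_forms_def by (intro CollectI conjI exI[of _ "S - {s}"]) auto
qed

lemma sum_coset_sums_raising:
  "(\<lambda>xs. \<Sum>t\<in>S'. coset_sum 1 S t T xs) = (\<lambda>xs. real q * T xs + cross_sum S S' T xs)"
  unfolding coset_sum_def cross_sum_def
  by (auto simp: fun_eq_iff sum.distrib card_S' sum.swap[of _ S S'])

lemma sum_coset_sums_lowering:
  "(\<lambda>xs. \<Sum>s\<in>S. coset_sum (-1) S' s T xs) = (\<lambda>xs. real k * T xs - cross_sum S S' T xs)"
  unfolding coset_sum_def cross_sum_def
  by (auto simp: fun_eq_iff sum_subtractf card_S transpose_commute)

private lemma transposition_row_sum_sym:
  assumes i: "i \<in> S"
  shows "(\<Sum>j\<in>{0..<n} - {i}. permute_form (transposition i j) T xs)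
         = (real k - 1) * T xs + (\<Sum>j\<in>S'. permute_form (transposition i j) T xs)"
proof -
  have "{0..<n} - {i} = (S - {i}) \<union> S'" "(S - {i}) \<inter> S' = {}" using i partition by auto
  then have "(\<Sum>j\<in>{0..<n} - {i}. permute_form (transposition i j) T xs)
             = (\<Sum>j\<in>S - {i}. permute_form (transposition i j) T xs)
               + (\<Sum>j\<in>S'. permute_form (transposition i j) T xs)"
    using finite_blocks by (simp add: sum.union_disjoint)
  also have "(\<Sum>j\<in>S - {i}. permute_form (transposition i j) T xs) = (\<Sum>j\<in>S - {i}. T xs)"
    using semi_invariantD[OF sym permutes_swap_id] i by (intro sum.cong) auto
  also have "\<dots> = (real k - 1) * T xs"
  proof -
    have "0 < k" using i finite_blocks(1) card_S card_gt_0_iff by blast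
    then show ?thesis using i finite_blocks card_S by (simp add: of_nat_diff)
  qed
  finally show ?thesis .
qed

private lemma transposition_row_sum_skew:
  assumes i: "i \<in> S'"
  shows "(\<Sum>j\<in>{0..<n} - {i}. permute_form (transposition i j) T xs)
         = (\<Sum>j\<in>S. permute_form (transposition j i) T xs) - (real q - 1) * T xs"
proof -
  have "{0..<n} - {i} = S \<union> (S' - {i})" "S \<inter> (S' - {i}) = {}" using i partition by auto
  then have "(\<Sum>j\<in>{0..<n} - {i}. permute_form (transposition i j) T xs)
             = (\<Sum>j\<in>S. permute_form (transposition i j) T xs)
               + (\<Sum>j\<in>S' - {i}. permute_form (transposition i j) T xs)"
    using finite_blocks by (simp add: sum.union_disjoint)
  also have "(\<Sum>j\<in>S' - {i}. permute_form (transposition i j) T xs) = (\<Sum>j\<in>S' - {i}. - T xs)"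
    using semi_invariantD[OF skew permutes_swap_id] i by (intro sum.cong) (auto simp: sign_swap_id)
  also have "\<dots> = - ((real q - 1) * T xs)"
  proof -
    have "0 < q" using i finite_blocks(2) card_S' card_gt_0_iff by blast
    then show ?thesis using i finite_blocks card_S' by (simp add: of_nat_diff sum_negf)
  qed
  finally show ?thesis by (simp add: transpose_commute)
qed

lemma transposition_sum_eq:
  "transposition_sum n T
     = (\<lambda>xs. (real k * (real k - 1) - real q * (real q - 1)) * T xs + 2 * cross_sum S S' T xs)"
proof
  fix xs
  let ?row = "\<lambda>i. \<Sum>j\<in>{0..<n} - {i}. permute_form (transposition i j) T xs"
  have "transposition_sum n T xs = (\<Sum>i\<in>S. ?row i) + (\<Sum>i\<in>S'. ?row i)"
    unfolding transposition_sum_def using finite_blocks partition by (simp flip: sum.union_disjoint)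
  also have "(\<Sum>i\<in>S. ?row i) = real k * ((real k - 1) * T xs) + cross_sum S S' T xs"
    using transposition_row_sum_sym by (simp add: cross_sum_def sum.distrib card_S)
  also have "(\<Sum>i\<in>S'. ?row i) = cross_sum S S' T xs - real q * ((real q - 1) * T xs)"
    using transposition_row_sum_skew
    by (simp add: cross_sum_def sum_subtractf card_S' sum.swap[of _ S' S])
  finally show "transposition_sum n T xs
      = (real k * (real k - 1) - real q * (real q - 1)) * T xs + 2 * cross_sum S S' T xs"
    by (simp add: algebra_simps)
qed

lemma transposition_comb_raising:
  assumes "0 < n"
  shows "transposition_comb n (raising_coeff k q) (1 / (2 * real n)) T
         = (\<lambda>xs. (1 / real n) * (\<Sum>t\<in>S'. coset_sum 1 S t T xs))"
proof
  fix xs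
  have identity: "((q - \<kappa> / 2) / real n) * x + 1 / (2 * real n) * (\<kappa> * x + 2 * y) = 1 / real n * (q * x + y)"
    for q \<kappa> x y :: real
    using assms by (simp add: field_simps)
  show "transposition_comb n (raising_coeff k q) (1 / (2 * real n)) T xs
        = (1 / real n) * (\<Sum>t\<in>S'. coset_sum 1 S t T xs)"
    unfolding transposition_comb_def transposition_sum_eq raising_coeff_def n_eq[symmetric]
      fun_cong[OF sum_coset_sums_raising]
    by (rule identity)
qed

lemma transposition_comb_lowering:
  assumes "0 < n"
  shows "transposition_comb n (1 - raising_coeff k q) (- (1 / (2 * real n))) T
         = (\<lambda>xs. (1 / real n) * (\<Sum>s\<in>S. coset_sum (-1) S' s T xs))"
proof
  fix xs
  have identity: "(1 - (q - \<kappa> / 2) / real n) * x + - (1 / (2 * real n)) * (\<kappa> * x + 2 * y)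
                  = 1 / real n * (k * x - y)"
    if "k = real n - q" for k q \<kappa> x y :: real
    unfolding that using assms by (simp add: field_simps)
  show "transposition_comb n (1 - raising_coeff k q) (- (1 / (2 * real n))) T xs
        = (1 / real n) * (\<Sum>s\<in>S. coset_sum (-1) S' s T xs)"
    unfolding transposition_comb_def transposition_sum_eq raising_coeff_def n_eq[symmetric]
      fun_cong[OF sum_coset_sums_lowering]
    by (rule identity) (simp add: n_eq)
qed

end

lemma sym_skew_forms_partitionE:
  assumes "T \<in> sym_skew_forms n k" "n = k + q"
  obtains S S' where "T \<in> tensor_power n" "S \<union> S' = {0..<n}" "S \<inter> S' = {}" "card S = k" "card S' = q"
    "semi_invariant S (\<lambda>_. 1) T" "semi_invariant S' rsign T"
proof -
  obtain S where S: "T \<in> tensor_power n" "S \<subseteq> {0..<n}" "card S = k" "sym_skew_in n S T"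
    using assms(1) by (rule sym_skew_formsE)
  have "card ({0..<n} - S) = q"
    using S(2,3) assms(2) by (simp add: card_Diff_subset finite_subset)
  then show thesis
    using that[of S "{0..<n} - S"] S sym_skew_in_iff_semi_invariant[OF S(1)] by auto
qed

lemma transposition_comb_sym_skew_forms:
  assumes "g \<in> sym_skew_forms n k"
  shows "transposition_comb n \<alpha> \<beta> g \<in> lin_span (sym_skew_forms n k)"
  unfolding transposition_comb_def transposition_sum_def
  using assms
  by (intro lin_span_add lin_span_scale lin_span_sum lin_span_base sym_skew_forms_permute permutes_swap_id)
    auto

lemma transposition_comb_raises_sym_skew_forms:
  assumes "g \<in> sym_skew_forms n k" "n = k + q" "0 < n"
  shows "transposition_comb n (raising_coeff k q) (1 / (2 * real n)) g \<in> lin_span (sym_skew_forms n (Suc k))"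
proof -
  obtain S S' where S: "g \<in> tensor_power n" "S \<union> S' = {0..<n}" "S \<inter> S' = {}" "card S = k"
    "card S' = q" "semi_invariant S (\<lambda>_. 1) g" "semi_invariant S' rsign g"
    using assms(1,2) by (rule sym_skew_forms_partitionE)
  show ?thesis
    unfolding transposition_comb_raising[OF S assms(3)]
    by (intro lin_span_scale lin_span_sum lin_span_base coset_sum_raises[OF S])
qed

lemma transposition_comb_lowers_sym_skew_forms:
  assumes "g \<in> sym_skew_forms n k" "n = k + q" "0 < n"
  shows "transposition_comb n (1 - raising_coeff k q) (- (1 / (2 * real n))) g
         \<in> lin_span (sym_skew_forms n (k - 1))"
proof -
  obtain S S' where S: "g \<in> tensor_power n" "S \<union> S' = {0..<n}" "S \<inter> S' = {}" "card S = k"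
    "card S' = q" "semi_invariant S (\<lambda>_. 1) g" "semi_invariant S' rsign g"
    using assms(1,2) by (rule sym_skew_forms_partitionE)
  show ?thesis
    unfolding transposition_comb_lowering[OF S assms(3)]
    by (intro lin_span_scale lin_span_sum lin_span_base coset_sum_lowers[OF S])
qed


section \<open>Extension to the closed span\<close>

lemma tensor_power_transposition_sum:
  "d \<in> tensor_power n \<Longrightarrow> transposition_sum n d \<in> tensor_power n"
  unfolding transposition_sum_def
  by (intro tensor_power_sum tensor_power_permute permutes_swap_id) auto

lemma transposition_comb_add:
  "transposition_comb n \<alpha> \<beta> (\<lambda>xs. a xs + b xs)
     = (\<lambda>xs. transposition_comb n \<alpha> \<beta> a xs + transposition_comb n \<alpha> \<beta> b xs)"
  by (simp add: transposition_comb_def transposition_sum_def permute_form_def sum.distrib algebra_simps)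

lemma transposition_comb_scale:
  "transposition_comb n \<alpha> \<beta> (\<lambda>xs. c * a xs) = (\<lambda>xs. c * transposition_comb n \<alpha> \<beta> a xs)"
  by (simp add: transposition_comb_def transposition_sum_def permute_form_def sum_distrib_left
      algebra_simps)

lemma tnorm_sq_transposition_comb_le:
  "\<exists>M. \<forall>d \<in> (tensor_power n :: ('a::real_inner list \<Rightarrow> real) set).
         tnorm_sq n (transposition_comb n \<alpha> \<beta> d) \<le> M * tnorm_sq n d"
proof -
  define P where "P = Sigma {0..<n} (\<lambda>i. {0..<n} - {i})"
  have P: "finite P" "\<And>p. p \<in> P \<Longrightarrow> transposition (fst p) (snd p) permutes {0..<n}"
    unfolding P_def by (auto intro: permutes_swap_id)
  define M where "M = 2 * \<alpha>\<^sup>2 + 2 * \<beta>\<^sup>2 * (2 ^ card P * real (card P))"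
  have "tnorm_sq n (transposition_comb n \<alpha> \<beta> d) \<le> M * tnorm_sq n d"
    if d: "d \<in> (tensor_power n :: ('a list \<Rightarrow> real) set)" for d
  proof -
    have "transposition_sum n d = (\<lambda>xs. \<Sum>p\<in>P. permute_form (transposition (fst p) (snd p)) d xs)"
      unfolding transposition_sum_def P_def by (simp add: sum.Sigma split_def)
    then have "tnorm_sq n (transposition_sum n d)
               \<le> 2 ^ card P * (\<Sum>p\<in>P. tnorm_sq n (permute_form (transposition (fst p) (snd p)) d))"
      using P d by (simp add: tnorm_sq_sum_le tensor_power_permute)
    also have "\<dots> = 2 ^ card P * real (card P) * tnorm_sq n d"
      using P by (simp add: tnorm_sq_permute)
    finally have D: "tnorm_sq n (transposition_sum n d) \<le> 2 ^ card P * real (card P) * tnorm_sq n d" .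
    have "tnorm_sq n (transposition_comb n \<alpha> \<beta> d)
          \<le> 2 * tnorm_sq n (\<lambda>xs. \<alpha> * d xs) + 2 * tnorm_sq n (\<lambda>xs. \<beta> * transposition_sum n d xs)"
      unfolding transposition_comb_def
      by (intro tnorm_sq_add_le tensor_power_scale d tensor_power_transposition_sum)
    also have "\<dots> \<le> 2 * \<alpha>\<^sup>2 * tnorm_sq n d + 2 * \<beta>\<^sup>2 * (2 ^ card P * real (card P) * tnorm_sq n d)"
      using D by (simp add: tnorm_sq_scale mult_left_mono)
    finally show ?thesis by (simp add: M_def algebra_simps)
  qed
  then show ?thesis by blast
qed

lemma closed_span_transposition_comb:
  fixes T :: "'a::real_inner list \<Rightarrow> real"
  assumes X: "X \<subseteq> tensor_power n"
    and generators: "\<And>g. g \<in> X \<Longrightarrow> transposition_comb n \<alpha> \<beta> g \<in> lin_span Y"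
    and T: "T \<in> closed_span n X"
  shows "transposition_comb n \<alpha> \<beta> T \<in> closed_span n Y"
proof -
  obtain M where M: "\<And>d. d \<in> (tensor_power n :: ('a list \<Rightarrow> real) set) \<Longrightarrow>
                       tnorm_sq n (transposition_comb n \<alpha> \<beta> d) \<le> M * tnorm_sq n d"
    using tnorm_sq_transposition_comb_le by blast
  have "transposition_comb n \<alpha> \<beta> d \<in> tensor_power n" if "d \<in> tensor_power n" for d
    unfolding transposition_comb_def using that
    by (intro tensor_power_add tensor_power_scale tensor_power_transposition_sum)
  then show ?thesis
    by (rule closed_span_map[OF X transposition_comb_add transposition_comb_scale _ M generators T])
qed

lemma closed_span_sym_skew_forms_decompose:
  assumes "n = k + q" "0 < n" "T \<in> closed_span n (sym_skew_forms n k)"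
  obtains a b where "T = (\<lambda>xs. a xs + b xs)"
    "a \<in> closed_span n (sym_skew_forms n k)" "a \<in> closed_span n (sym_skew_forms n (Suc k))"
    "b \<in> closed_span n (sym_skew_forms n k)" "b \<in> closed_span n (sym_skew_forms n (k - 1))"
proof
  let ?\<alpha> = "raising_coeff k q" and ?\<beta> = "1 / (2 * real n)"
  show "T = (\<lambda>xs. transposition_comb n ?\<alpha> ?\<beta> T xs + transposition_comb n (1 - ?\<alpha>) (- ?\<beta>) T xs)"
    by (simp add: transposition_comb_def algebra_simps)
  note closed = closed_span_transposition_comb[OF sym_skew_forms_subset_tensor_power _ assms(3)]
  show "transposition_comb n ?\<alpha> ?\<beta> T \<in> closed_span n (sym_skew_forms n k)"
    by (rule closed) (rule transposition_comb_sym_skew_forms)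
  show "transposition_comb n (1 - ?\<alpha>) (- ?\<beta>) T \<in> closed_span n (sym_skew_forms n k)"
    by (rule closed) (rule transposition_comb_sym_skew_forms)
  show "transposition_comb n ?\<alpha> ?\<beta> T \<in> closed_span n (sym_skew_forms n (Suc k))"
    using assms by (intro closed transposition_comb_raises_sym_skew_forms)
  show "transposition_comb n (1 - ?\<alpha>) (- ?\<beta>) T \<in> closed_span n (sym_skew_forms n (k - 1))"
    using assms transposition_comb_lowers_sym_skew_forms[of _ n k q] by (intro closed) simp
qed


section \<open>Orthogonality\<close>

lemma tinner_sym_skew_forms_orthogonal:
  assumes "m' + 2 \<le> m" and g: "g \<in> sym_skew_forms n m" and h: "h \<in> sym_skew_forms n m'"
  shows "tinner n g h = 0"
proof -
  obtain S where S: "g \<in> tensor_power n" "S \<subseteq> {0..<n}" "card S = m" "sym_skew_in n S g"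
    using g by (rule sym_skew_formsE)
  obtain S' where S': "h \<in> tensor_power n" "S' \<subseteq> {0..<n}" "card S' = m'" "sym_skew_in n S' h"
    using h by (rule sym_skew_formsE)
  define R where "R = {0..<n} - S'"
  have "card S + card R = card (S \<union> R) + card (S \<inter> R)"
    by (rule card_Un_Int) (use S(2) in \<open>auto simp: R_def intro: finite_subset\<close>)
  moreover have "card (S \<union> R) \<le> n" using S(2) card_mono[of "{0..<n}" "S \<union> R"] by (auto simp: R_def)
  moreover have "card R = n - m'" using S'(2,3) by (simp add: R_def card_Diff_subset finite_subset)
  moreover have "m \<le> n" using S(2,3) card_mono[of "{0..<n}" S] by simp
  ultimately have "2 \<le> card (S \<inter> R)" using S(3) assms(1) by linarith
  then obtain i j where ij: "i \<in> S \<inter> R" "j \<in> S \<inter> R" "i \<noteq> j"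
    by (metis card_le_Suc_iff numeral_2_eq_2 insertCI)
  have "transposition i j permutes S" "transposition i j permutes R"
    using ij by (auto intro: permutes_swap_id)
  then have "permute_form (transposition i j) g = g"
    and "permute_form (transposition i j) h = (\<lambda>xs. - h xs)"
    using S(4) S'(4) ij(3) sym_skew_in_iff_semi_invariant[OF S(1)] sym_skew_in_iff_semi_invariant[OF S'(1)]
    by (auto simp: R_def semi_invariant_def sign_swap_id)
  then have "tinner n g h = tinner n g (\<lambda>xs. (-1) * h xs)"
    using tinner_permute[OF permutes_subset[OF \<open>transposition i j permutes S\<close> S(2)], of g h] by simp
  also have "\<dots> = - tinner n g h"
    using tinner_scale_left[of n "-1" h g] by (simp add: tinner_commute)
  finally show ?thesis by simp
qed


lemma sym_skew_space_add:
  assumes "a \<in> sym_skew_space m p" "b \<in> sym_skew_space m p"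
  shows "(\<lambda>xs. a xs + b xs) \<in> sym_skew_space m p"
  using assms unfolding sym_skew_space_def Let_def
  by (auto intro: closed_span_add)

lemma sym_skew_space_raised:
  "0 < q \<Longrightarrow> sym_skew_space (int k + 1) (int q - 1) = closed_span (k + q) (sym_skew_forms (k + q) (Suc k))"
  using sym_skew_space_eq_closed_span[of "Suc k" "q - 1"] by (simp add: of_nat_diff add.commute)

lemma sym_skew_space_lowered:
  "0 < k \<Longrightarrow> sym_skew_space (int k - 1) (int q + 1) = closed_span (k + q) (sym_skew_forms (k + q) (k - 1))"
  using sym_skew_space_eq_closed_span[of "k - 1" "Suc q"] by (simp add: of_nat_diff add.commute)

lemma sym_skew_space_all_sym_subset:
  assumes "0 < k"
  shows "(sym_skew_space (int k) 0 :: ('a::real_inner list \<Rightarrow> real) set) \<subseteq> sym_skew_space (int k - 1) 1"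
proof -
  have "(sym_skew_space (int k) 0 :: ('a list \<Rightarrow> real) set) = closed_span k (sym_skew_forms k k)"
    using sym_skew_space_eq_closed_span[of k 0] by simp
  also have "\<dots> \<subseteq> closed_span k (sym_skew_forms k (k - 1))"
    using assms by (intro closed_span_mono sym_skew_forms_all_sym_subset) simp
  also have "\<dots> = sym_skew_space (int k - 1) 1"
    by (simp add: sym_skew_space_lowered[OF assms, of 0, simplified])
  finally show ?thesis .
qed

lemma sym_skew_space_all_skew_subset:
  assumes "0 < q"
  shows "(sym_skew_space 0 (int q) :: ('a::real_inner list \<Rightarrow> real) set) \<subseteq> sym_skew_space 1 (int q - 1)"
proof -
  have "(sym_skew_space 0 (int q) :: ('a list \<Rightarrow> real) set) = closed_span q (sym_skew_forms q 0)"
    using sym_skew_space_eq_closed_span[of 0 q] by simp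
  also have "\<dots> \<subseteq> closed_span q (sym_skew_forms q 1)"
    using assms by (intro closed_span_mono sym_skew_forms_all_skew_subset) simp
  also have "\<dots> = sym_skew_space 1 (int q - 1)"
    by (simp add: sym_skew_space_raised[OF assms, of 0, simplified])
  finally show ?thesis .
qed

lemma sym_skew_space_orthogonal:
  assumes a: "a \<in> sym_skew_space (int k + 1) (int q - 1)" and b: "b \<in> sym_skew_space (int k - 1) (int q + 1)"
  shows "tinner (k + q) a b = 0"
proof (cases "q = 0 \<or> k = 0")
  case True
  then consider "q = 0" | "k = 0" by blast
  then show ?thesis
  proof cases
    case 1
    then have "sym_skew_space (int k + 1) (int q - 1) = {\<lambda>_. 0}" by (intro sym_skew_space_negative) simp
    then have "a = (\<lambda>_. 0)" using a by blast
    then show ?thesis by (simp add: tinner_zero_left)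
  next
    case 2
    then have "sym_skew_space (int k - 1) (int q + 1) = {\<lambda>_. 0}" by (intro sym_skew_space_negative) simp
    then have "b = (\<lambda>_. 0)" using b by blast
    then show ?thesis using tinner_commute[of "k + q" a b] by (simp add: tinner_zero_left)
  qed
next
  case False
  then have "0 < k" "0 < q" by auto
  show ?thesis
  proof (rule tinner_closed_span_orthogonal[OF sym_skew_forms_subset_tensor_power
        sym_skew_forms_subset_tensor_power])
    show "tinner (k + q) x y = 0"
      if "x \<in> sym_skew_forms (k + q) (Suc k)" "y \<in> sym_skew_forms (k + q) (k - 1)" for x y
      using that by (rule tinner_sym_skew_forms_orthogonal[rotated]) (use \<open>0 < k\<close> in simp)
    show "a \<in> closed_span (k + q) (sym_skew_forms (k + q) (Suc k))"
      using a by (simp only: sym_skew_space_raised[OF \<open>0 < q\<close>])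
    show "b \<in> closed_span (k + q) (sym_skew_forms (k + q) (k - 1))"
      using b by (simp only: sym_skew_space_lowered[OF \<open>0 < k\<close>])
  qed
qed

lemma sym_skew_space_decompose:
  fixes T :: "'a::real_inner list \<Rightarrow> real"
  assumes T: "T \<in> sym_skew_space (int k) (int q)" and n: "1 \<le> k + q"
  obtains a b where "T = (\<lambda>xs. a xs + b xs)"
    "a \<in> sym_skew_space (int k) (int q) \<inter> sym_skew_space (int k + 1) (int q - 1)"
    "b \<in> sym_skew_space (int k) (int q) \<inter> sym_skew_space (int k - 1) (int q + 1)"
proof -
  have V: "sym_skew_space (int k) (int q) = (closed_span (k + q) (sym_skew_forms (k + q) k) :: ('a list \<Rightarrow> real) set)"
    by (rule sym_skew_space_eq_closed_span)
  have zero: "(\<lambda>_. 0) \<in> (sym_skew_space (int k) (int q) :: ('a list \<Rightarrow> real) set)"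
    unfolding V by (rule closed_span_zero)
  consider "q = 0" | "k = 0" | "0 < k" "0 < q" by blast
  then show thesis
  proof cases
    case 1
    then have "T \<in> sym_skew_space (int k - 1) (int q + 1)"
      using T n sym_skew_space_all_sym_subset[of k] by auto
    moreover have "sym_skew_space (int k + 1) (int q - 1) = {\<lambda>_. 0}"
      using 1 by (intro sym_skew_space_negative) simp
    ultimately show thesis
      using T zero by (intro that[of "\<lambda>_. 0" T]) (simp, blast+)
  next
    case 2
    then have "T \<in> sym_skew_space (int k + 1) (int q - 1)"
      using T n sym_skew_space_all_skew_subset[of q] by auto
    moreover have "sym_skew_space (int k - 1) (int q + 1) = {\<lambda>_. 0}"
      using 2 by (intro sym_skew_space_negative) simp
    ultimately show thesis
      using T zero by (intro that[of T "\<lambda>_. 0"]) (simp, blast+)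
  next
    case 3
    have "0 < k + q" "T \<in> closed_span (k + q) (sym_skew_forms (k + q) k)" using 3 T V by simp_all
    then obtain a b where "T = (\<lambda>xs. a xs + b xs)"
      "a \<in> closed_span (k + q) (sym_skew_forms (k + q) k)"
      "a \<in> closed_span (k + q) (sym_skew_forms (k + q) (Suc k))"
      "b \<in> closed_span (k + q) (sym_skew_forms (k + q) k)"
      "b \<in> closed_span (k + q) (sym_skew_forms (k + q) (k - 1))"
      by (rule closed_span_sym_skew_forms_decompose[OF refl])
    then show thesis
      using 3 V by (intro that[of a b]) (simp_all only: sym_skew_space_raised sym_skew_space_lowered IntI)
  qed
qed

theorem lemma4p2:
  fixes k q :: nat
  assumes "separable_space (euclidean :: ('a::{real_inner, complete_space}) topology)"
    and "k + q \<ge> 1"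
  defines "V \<equiv> (sym_skew_space (int k) (int q) :: ('a list \<Rightarrow> real) set)"
    and "A \<equiv> sym_skew_space (int k) (int q) \<inter> sym_skew_space (int k + 1) (int q - 1)"
    and "B \<equiv> sym_skew_space (int k) (int q) \<inter> sym_skew_space (int k - 1) (int q + 1)"
  shows "V = {(\<lambda>xs. a xs + b xs) | a b. a \<in> A \<and> b \<in> B}
         \<and> (\<forall>a\<in>A. \<forall>b\<in>B. tinner (k + q) a b = 0)"
proof (intro conjI)
  show "V = {(\<lambda>xs. a xs + b xs) | a b. a \<in> A \<and> b \<in> B}"
  proof
    show "V \<subseteq> {(\<lambda>xs. a xs + b xs) | a b. a \<in> A \<and> b \<in> B}"
    proof
      fix T assume "T \<in> V"
      then obtain a b where "T = (\<lambda>xs. a xs + b xs)" "a \<in> A" "b \<in> B"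
        unfolding V_def A_def B_def by (rule sym_skew_space_decompose[OF _ assms(2)])
      then show "T \<in> {(\<lambda>xs. a xs + b xs) | a b. a \<in> A \<and> b \<in> B}" by blast
    qed
    show "{(\<lambda>xs. a xs + b xs) | a b. a \<in> A \<and> b \<in> B} \<subseteq> V"
      unfolding V_def A_def B_def by (blast intro: sym_skew_space_add)
  qed
  show "\<forall>a\<in>A. \<forall>b\<in>B. tinner (k + q) a b = 0"
    unfolding A_def B_def by (blast intro: sym_skew_space_orthogonal)
qed

end
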